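(* Let $n\ge 2$ and let $D$ be a division ring. Then the matrix ring ${\rm M}_n(D)$ is GWNC if, and only if, either $D\cong\mathbb{Z}_2$, or $D\cong\mathbb{Z}_3$ and $n=2$.
   Context: All rings are associative with identity. For a ring $S$, $U(S)$, ${\rm Nil}(S)$, ${\rm Id}(S)$ denote units, nilpotents, idempotents. $S$ is GWNC if every $a\in S\setminus U(S)$ can be written as $a=q+e$ or $a=q-e$ with $q\in{\rm Nil}(S)$, $e\in{\rm Id}(S)$. *)

theory Defs
  imports "Jordan_Normal_Form.Matrix" "HOL-Algebra.Ring" "HOL-Library.Numeral_Type"
begin

definition nilpotents :: "('a, 'b) ring_scheme \<Rightarrow> 'a set" where
  "nilpotents R = {q \<in> carrier R. \<exists>k::nat. q [^]\<^bsub>R\<^esub> k = \<zero>\<^bsub>R\<^esub>}"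

definition idempotents :: "('a, 'b) ring_scheme \<Rightarrow> 'a set" where
  "idempotents R = {e \<in> carrier R. e \<otimes>\<^bsub>R\<^esub> e = e}"

definition GWNC :: "('a, 'b) ring_scheme \<Rightarrow> bool" where
  "GWNC R \<longleftrightarrow> (\<forall>a \<in> carrier R - Units R. \<exists>q \<in> nilpotents R. \<exists>e \<in> idempotents R.
      a = q \<oplus>\<^bsub>R\<^esub> e \<or> a = q \<ominus>\<^bsub>R\<^esub> e)"

definition ring_iso_ty :: "('a::ring_1 \<Rightarrow> 'b::ring_1) \<Rightarrow> bool" where
  "ring_iso_ty f \<longleftrightarrow> bij f \<and> f 1 = 1 \<and>
     (\<forall>x y. f (x + y) = f x + f y) \<and> (\<forall>x y. f (x * y) = f x * f y)"

end

theory Submission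
  imports Defs "Jordan_Normal_Form.Column_Operations"
begin

(*
  If D has an element a outside {0, 1, -1}, the singular corner matrix diag(a, 0, ..., 0) is not
  e + q nor -(e + q) with e idempotent and q nilpotent: under q the pair (y_0, (e y)_0) follows a
  linear recurrence that never reaches (0, 0). So D is F2 or F3.

  Over F3 with n >= 3, take A = diag(1, -1, 0, ..., 0). If A = e + q, the image of e meets the kernel
  of A trivially, so e has rank r <= 2; comparing traces gives r = 0 in F3, hence e = 0 and A would be
  nilpotent. For n = 2 a singular A satisfies A^2 = tr(A) A, so A is nilpotent, idempotent, or minus
  an idempotent.

  Over F2 every matrix is nil-clean. A chain e_0, A e_0, A^2 e_0, ... of basis vectors, built by
  transvection similarities, makes A block upper triangular with a companion block, and a companion
  matrix over F2 is an idempotent of rank one or two plus a conjugate of the shift matrix.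
*)

lemma mult_mat_vec_unit_vec_index:
  assumes "(M :: 'a::semiring_1 mat) \<in> carrier_mat n m" "j < m" "i < n"
  shows "(M *\<^sub>v unit_vec m j) $ i = M $$ (i, j)"
  using assms by simp

lemma mult_mat_vec_unit_vec:
  assumes "(M :: 'a::semiring_1 mat) \<in> carrier_mat n m" "j < m"
  shows "M *\<^sub>v unit_vec m j = col M j"
  using assms by (intro eq_vecI) auto

lemma mat_eq_by_unit_vecs:
  assumes A: "(A :: 'a::semiring_1 mat) \<in> carrier_mat n m" and B: "B \<in> carrier_mat n m"
    and AB: "\<And>j. j < m \<Longrightarrow> A *\<^sub>v unit_vec m j = B *\<^sub>v unit_vec m j"
  shows "A = B"
proof (rule eq_matI)
  fix i j assume "i < dim_row B" "j < dim_col B"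
  then have i: "i < n" and j: "j < m" using B by auto
  have "A $$ (i, j) = (A *\<^sub>v unit_vec m j) $ i" using A i j by simp
  also have "\<dots> = B $$ (i, j)" unfolding AB[OF j] using B i j by simp
  finally show "A $$ (i, j) = B $$ (i, j)" .
qed (use A B in auto)

lemma mult_square_carrier_mat [simp]:
  "A \<in> carrier_mat n n \<Longrightarrow> B \<in> carrier_mat n n \<Longrightarrow> A * B \<in> carrier_mat n n"
  by (rule mult_carrier_mat)

lemma mult_mat_vec_zero_vec [simp]: "M *\<^sub>v 0\<^sub>v m = (0\<^sub>v (dim_row M) :: 'a::semiring_0 vec)"
  by (intro eq_vecI) (auto simp: scalar_prod_def)

lemma zero_mat_mult_vec [simp]: "v \<in> carrier_vec m \<Longrightarrow> 0\<^sub>m n m *\<^sub>v v = (0\<^sub>v n :: 'a::semiring_0 vec)"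
  by (intro eq_vecI) (auto simp: scalar_prod_def)

lemma mult_mat_vec_right_scale:
  assumes "(M :: 'a::semiring_0 mat) \<in> carrier_mat n m" "x \<in> carrier_vec m"
  shows "M *\<^sub>v vec m (\<lambda>j. x $ j * c) = vec n (\<lambda>i. (M *\<^sub>v x) $ i * c)"
  using assms by (intro eq_vecI) (auto simp: scalar_prod_def sum_distrib_right mult.assoc)

lemma mult_mat_vec_minus_right_scale:
  assumes "(M :: 'a::ring mat) \<in> carrier_mat n m" "x \<in> carrier_vec m" "y \<in> carrier_vec m"
  shows "M *\<^sub>v vec m (\<lambda>j. x $ j - y $ j * c) = vec n (\<lambda>i. (M *\<^sub>v x) $ i - (M *\<^sub>v y) $ i * c)"
  using assms
  by (intro eq_vecI) (auto simp: scalar_prod_def sum_subtractf sum_distrib_right right_diff_distrib mult.assoc)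

lemma pow_mat_Suc_mult_vec:
  assumes "(q :: 'a::semiring_1 mat) \<in> carrier_mat n n" "v \<in> carrier_vec n"
  shows "q ^\<^sub>m Suc k *\<^sub>v v = q ^\<^sub>m k *\<^sub>v (q *\<^sub>v v)"
  using assms by (simp add: assoc_mult_mat_vec[of _ n n _ n])

lemma pow_mat_add:
  assumes "(A :: 'a::semiring_1 mat) \<in> carrier_mat n n"
  shows "A ^\<^sub>m (a + b) = A ^\<^sub>m a * A ^\<^sub>m b"
proof (induction b)
  case (Suc b)
  then show ?case using assms by (simp add: assoc_mult_mat[of _ n n _ n _ n])
qed (use assms in simp)

lemma pow_mat_eq_zero_mono:
  assumes "(A :: 'a::semiring_1 mat) \<in> carrier_mat n n" "A ^\<^sub>m a = 0\<^sub>m n n" "a \<le> b"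
  shows "A ^\<^sub>m b = 0\<^sub>m n n"
proof -
  obtain d where "b = a + d" using assms(3) le_Suc_ex by blast
  then show ?thesis using assms(1,2) by (simp add: pow_mat_add)
qed

lemma pow_mat_uminus:
  assumes "(A :: 'a::ring_1 mat) \<in> carrier_mat n n"
  shows "(- A) ^\<^sub>m k = (-1) ^ k \<cdot>\<^sub>m A ^\<^sub>m k"
proof (induction k)
  case 0
  then show ?case using assms by (auto intro!: eq_matI)
next
  case (Suc k)
  have "(- A) ^\<^sub>m Suc k = ((-1) ^ k \<cdot>\<^sub>m A ^\<^sub>m k) * (- A)" using Suc by simp
  also have "\<dots> = (-1) ^ Suc k \<cdot>\<^sub>m (A ^\<^sub>m k * A)"
    using assms by (auto intro!: eq_matI simp: scalar_prod_def sum_distrib_left mult.assoc sum_negf)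
  finally show ?case by simp
qed

lemma pow_four_block_mat_upper:
  assumes A: "(A :: 'a::semiring_1 mat) \<in> carrier_mat k k" and X: "X \<in> carrier_mat k l"
    and B: "B \<in> carrier_mat l l"
  obtains Y where "Y \<in> carrier_mat k l"
    "four_block_mat A X (0\<^sub>m l k) B ^\<^sub>m j = four_block_mat (A ^\<^sub>m j) Y (0\<^sub>m l k) (B ^\<^sub>m j)"
proof -
  have "\<exists>Y \<in> carrier_mat k l.
    four_block_mat A X (0\<^sub>m l k) B ^\<^sub>m j = four_block_mat (A ^\<^sub>m j) Y (0\<^sub>m l k) (B ^\<^sub>m j)"
  proof (induction j)
    case 0
    have "four_block_mat (1\<^sub>m k) (0\<^sub>m k l) (0\<^sub>m l k) (1\<^sub>m l) = (1\<^sub>m (k + l) :: 'a mat)"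
      by (rule eq_matI) auto
    then show ?case using A B by (intro bexI[of _ "0\<^sub>m k l"]) auto
  next
    case (Suc j)
    then obtain Y where Y: "Y \<in> carrier_mat k l"
      and pow: "four_block_mat A X (0\<^sub>m l k) B ^\<^sub>m j = four_block_mat (A ^\<^sub>m j) Y (0\<^sub>m l k) (B ^\<^sub>m j)"
      by blast
    have "four_block_mat A X (0\<^sub>m l k) B ^\<^sub>m Suc j
        = four_block_mat (A ^\<^sub>m j) Y (0\<^sub>m l k) (B ^\<^sub>m j) * four_block_mat A X (0\<^sub>m l k) B"
      using pow by simp
    also have "\<dots> = four_block_mat (A ^\<^sub>m j * A + Y * 0\<^sub>m l k) (A ^\<^sub>m j * X + Y * B)
        (0\<^sub>m l k * A + B ^\<^sub>m j * 0\<^sub>m l k) (0\<^sub>m l k * X + B ^\<^sub>m j * B)"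
      using A B X Y by (intro mult_four_block_mat) auto
    also have "\<dots> = four_block_mat (A ^\<^sub>m Suc j) (A ^\<^sub>m j * X + Y * B) (0\<^sub>m l k) (B ^\<^sub>m Suc j)"
      using A B X Y by (simp add: mult_carrier_mat[of _ k k _ k] mult_carrier_mat[of _ l l _ l])
    finally show ?case using A B X Y by (intro bexI[of _ "A ^\<^sub>m j * X + Y * B"]) auto
  qed
  then show ?thesis using that by blast
qed

lemma similar_mat_wit_conjugate:
  assumes "A \<in> carrier_mat n n" "P \<in> carrier_mat n n" "Q \<in> carrier_mat n n"
    and "P * Q = 1\<^sub>m n" "Q * P = 1\<^sub>m n"
  shows "similar_mat_wit A (Q * A * P) P Q"
proof (rule similar_mat_witI[of _ _ n])
  have "P * (Q * A * P) * Q = (P * Q) * A * (P * Q)"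
    using assms(1-3) by (simp add: assoc_mult_mat[of _ n n _ n _ n])
  also have "\<dots> = A" using assms by simp
  finally show "A = P * (Q * A * P) * Q" ..
qed (use assms in auto)

section \<open>Nilpotent and nil-clean matrices\<close>

definition nilpotent_mat :: "nat \<Rightarrow> 'a::semiring_1 mat \<Rightarrow> bool" where
  "nilpotent_mat n N \<longleftrightarrow> (\<exists>k. N ^\<^sub>m k = 0\<^sub>m n n)"

lemma nilpotent_mat_uminus:
  assumes N: "(N :: 'a::ring_1 mat) \<in> carrier_mat n n" and "nilpotent_mat n N"
  shows "nilpotent_mat n (- N)"
proof -
  obtain k where "N ^\<^sub>m k = 0\<^sub>m n n" using assms(2) unfolding nilpotent_mat_def by blast
  then have "(- N) ^\<^sub>m k = 0\<^sub>m n n" unfolding pow_mat_uminus[OF N] by simp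
  then show ?thesis unfolding nilpotent_mat_def by blast
qed

lemma nilpotent_mat_no_stable_set:
  assumes q: "(q :: 'a::semiring_1 mat) \<in> carrier_mat n n" "nilpotent_mat n q"
    and S: "S \<subseteq> carrier_vec n" "0\<^sub>v n \<notin> S" "\<And>v. v \<in> S \<Longrightarrow> q *\<^sub>v v \<in> S"
    and v: "v \<in> S"
  shows False
proof -
  have orbit: "q ^\<^sub>m k *\<^sub>v v \<in> S" if "v \<in> S" for k v
    using that
  proof (induction k arbitrary: v)
    case 0
    then show ?case using q(1) S(1) by auto
  next
    case (Suc k)
    then show ?case using pow_mat_Suc_mult_vec[OF q(1)] S by auto
  qed
  obtain k where k: "q ^\<^sub>m k = 0\<^sub>m n n" using q(2) unfolding nilpotent_mat_def by blast
  then have "0\<^sub>v n \<in> S" using orbit[OF v, of k] v S(1) by auto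
  with S(2) show False ..
qed

lemma nilpotent_mat_similar:
  assumes "similar_mat_wit A B P Q" "A \<in> carrier_mat n n" "nilpotent_mat n A"
  shows "nilpotent_mat n B"
proof -
  obtain k where k: "A ^\<^sub>m k = 0\<^sub>m n n" using assms(3) unfolding nilpotent_mat_def by blast
  have "similar_mat_wit B A Q P" by (rule similar_mat_wit_sym[OF assms(1)])
  then have "B ^\<^sub>m k = Q * A ^\<^sub>m k * P" by (rule similar_mat_wit_pow_id)
  also have "\<dots> = 0\<^sub>m n n" using k similar_mat_witD2[OF assms(2,1)] by simp
  finally show ?thesis unfolding nilpotent_mat_def by blast
qed

definition nil_clean_mat :: "nat \<Rightarrow> 'a::semiring_1 mat \<Rightarrow> bool" where
  "nil_clean_mat n A \<longleftrightarrow> (\<exists>e q. e \<in> carrier_mat n n \<and> q \<in> carrier_mat n n \<and>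
     e * e = e \<and> nilpotent_mat n q \<and> A = e + q)"

lemma nil_clean_mat_idempotent:
  assumes "A \<in> carrier_mat n n" "A * A = A"
  shows "nil_clean_mat n (A :: 'a::semiring_1 mat)"
proof -
  have "nilpotent_mat n (0\<^sub>m n n :: 'a mat)" unfolding nilpotent_mat_def by (rule exI[of _ 1]) simp
  then show ?thesis unfolding nil_clean_mat_def using assms by (intro exI[of _ A] exI[of _ "0\<^sub>m n n"]) auto
qed

lemma nil_clean_mat_nilpotent:
  assumes "A \<in> carrier_mat n n" "nilpotent_mat n A"
  shows "nil_clean_mat n (A :: 'a::semiring_1 mat)"
  unfolding nil_clean_mat_def using assms by (intro exI[of _ "0\<^sub>m n n"] exI[of _ A]) auto

lemma nil_clean_mat_similar:
  assumes sim: "similar_mat_wit A B P Q" and B: "nil_clean_mat n B" and A: "A \<in> carrier_mat n n"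
  shows "nil_clean_mat n A"
proof -
  obtain e q where e: "e \<in> carrier_mat n n" "e * e = e" and q: "q \<in> carrier_mat n n" "nilpotent_mat n q"
    and B_eq: "B = e + q" using B unfolding nil_clean_mat_def by blast
  note sim' = similar_mat_witD2[OF A sim]
  have PQ: "P \<in> carrier_mat n n" "Q \<in> carrier_mat n n" "Q * P = 1\<^sub>m n" using sim' by auto
  have "(P * e * Q) * (P * e * Q) = P * e * (Q * P) * e * Q"
    using PQ(1,2) e(1) by (simp add: assoc_mult_mat[of _ n n _ n _ n])
  also have "\<dots> = P * e * Q" using PQ e by (simp add: assoc_mult_mat[of _ n n _ n _ n])
  finally have idem: "(P * e * Q) * (P * e * Q) = P * e * Q" .
  have "similar_mat_wit (P * q * Q) q P Q"
    using sim' q by (intro similar_mat_witI[of _ _ n]) auto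
  then have nil: "nilpotent_mat n (P * q * Q)"
    using nilpotent_mat_similar[OF similar_mat_wit_sym] q by blast
  have "A = P * e * Q + P * q * Q"
    using sim' e q unfolding B_eq by (simp add: mult_add_distrib_mat add_mult_distrib_mat[of _ n n])
  then show ?thesis unfolding nil_clean_mat_def using idem nil PQ e(1) q(1)
    by (intro exI[of _ "P * e * Q"] exI[of _ "P * q * Q"]) auto
qed

lemma nil_clean_four_block_mat:
  assumes C: "C \<in> carrier_mat k k" and X: "X \<in> carrier_mat k l" and B: "B \<in> carrier_mat l l"
    and "nil_clean_mat k C" "nil_clean_mat l (B :: 'a::semiring_1 mat)"
  shows "nil_clean_mat (k + l) (four_block_mat C X (0\<^sub>m l k) B)"
proof -
  obtain e1 q1 where e1: "e1 \<in> carrier_mat k k" "e1 * e1 = e1" and q1: "q1 \<in> carrier_mat k k"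
    and "nilpotent_mat k q1" and C_eq: "C = e1 + q1" using assms(4) unfolding nil_clean_mat_def by blast
  then obtain j1 where j1: "q1 ^\<^sub>m j1 = 0\<^sub>m k k" unfolding nilpotent_mat_def by blast
  obtain e2 q2 where e2: "e2 \<in> carrier_mat l l" "e2 * e2 = e2" and q2: "q2 \<in> carrier_mat l l"
    and "nilpotent_mat l q2" and B_eq: "B = e2 + q2" using assms(5) unfolding nil_clean_mat_def by blast
  then obtain j2 where j2: "q2 ^\<^sub>m j2 = 0\<^sub>m l l" unfolding nilpotent_mat_def by blast
  define e where "e = four_block_mat e1 (0\<^sub>m k l) (0\<^sub>m l k) e2"
  define q where "q = four_block_mat q1 X (0\<^sub>m l k) q2"
  have "e * e = four_block_mat (e1 * e1 + 0\<^sub>m k l * 0\<^sub>m l k) (e1 * 0\<^sub>m k l + 0\<^sub>m k l * e2)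
      (0\<^sub>m l k * e1 + e2 * 0\<^sub>m l k) (0\<^sub>m l k * 0\<^sub>m k l + e2 * e2)"
    unfolding e_def using e1 e2 by (intro mult_four_block_mat) auto
  also have "\<dots> = e" unfolding e_def using e1 e2 by simp
  finally have idem: "e * e = e" .
  have sum: "four_block_mat C X (0\<^sub>m l k) B = e + q"
    unfolding e_def q_def C_eq B_eq using e1 e2 q1 q2 X by (subst add_four_block_mat) auto
  define j where "j = max j1 j2"
  have "q1 ^\<^sub>m j = 0\<^sub>m k k" "q2 ^\<^sub>m j = 0\<^sub>m l l"
    using pow_mat_eq_zero_mono[OF q1 j1] pow_mat_eq_zero_mono[OF q2 j2] by (simp_all add: j_def)
  moreover obtain Y where Y: "Y \<in> carrier_mat k l"
    and "q ^\<^sub>m j = four_block_mat (q1 ^\<^sub>m j) Y (0\<^sub>m l k) (q2 ^\<^sub>m j)"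
    using pow_four_block_mat_upper[OF q1 X q2] unfolding q_def by metis
  ultimately have qj: "q ^\<^sub>m j = four_block_mat (0\<^sub>m k k) Y (0\<^sub>m l k) (0\<^sub>m l l)" by simp
  have q: "q \<in> carrier_mat (k + l) (k + l)" unfolding q_def using q1 q2 by simp
  have "q ^\<^sub>m (j + j) = four_block_mat (0\<^sub>m k k) Y (0\<^sub>m l k) (0\<^sub>m l l) * four_block_mat (0\<^sub>m k k) Y (0\<^sub>m l k) (0\<^sub>m l l)"
    unfolding pow_mat_add[OF q] qj ..
  also have "\<dots> = four_block_mat (0\<^sub>m k k * 0\<^sub>m k k + Y * 0\<^sub>m l k) (0\<^sub>m k k * Y + Y * 0\<^sub>m l l)
      (0\<^sub>m l k * 0\<^sub>m k k + 0\<^sub>m l l * 0\<^sub>m l k) (0\<^sub>m l k * Y + 0\<^sub>m l l * 0\<^sub>m l l)"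
    using Y by (intro mult_four_block_mat) auto
  also have "\<dots> = 0\<^sub>m (k + l) (k + l)" using Y by (intro eq_matI) auto
  finally have "nilpotent_mat (k + l) q" unfolding nilpotent_mat_def by blast
  moreover have "e \<in> carrier_mat (k + l) (k + l)" unfolding e_def using e1 e2 by simp
  ultimately show ?thesis unfolding nil_clean_mat_def using q idem sum by blast
qed

lemma nil_clean_image_kernel:
  fixes A :: "'a::ring_1 mat"
  assumes e: "e \<in> carrier_mat n n" "e * e = e" and q: "q \<in> carrier_mat n n" "nilpotent_mat n q"
    and A: "A = e + q" and y: "y \<in> carrier_vec n" and kernel: "A *\<^sub>v (e *\<^sub>v y) = 0\<^sub>v n"
  shows "e *\<^sub>v y = 0\<^sub>v n"
proof (rule ccontr)
  let ?w = "e *\<^sub>v y"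
  assume nonzero: "?w \<noteq> 0\<^sub>v n"
  have w: "?w \<in> carrier_vec n" using e y by simp
  have "?w = e *\<^sub>v ?w" using e y by (simp flip: assoc_mult_mat_vec)
  then have sum: "0\<^sub>v n = ?w + q *\<^sub>v ?w"
    using kernel add_mult_distrib_mat_vec[OF e(1) q(1) w] unfolding A by simp
  have qw: "q *\<^sub>v ?w = - ?w"
  proof (rule eq_vecI)
    fix i assume "i < dim_vec (- ?w)"
    then have i: "i < n" using e(1) by simp
    have "0 = ?w $ i + (q *\<^sub>v ?w) $ i" using arg_cong[OF sum, of "\<lambda>v. v $ i"] i w q(1) by simp
    then show "(q *\<^sub>v ?w) $ i = (- ?w) $ i" using i e(1) by (simp add: add_eq_0_iff)
  qed (use q(1) e(1) in simp)
  have "q *\<^sub>v (- ?w) = - (q *\<^sub>v ?w)" using q(1) e(1) by (intro eq_vecI) auto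
  then have "q *\<^sub>v (- ?w) = ?w" using qw by simp
  moreover have "- ?w \<noteq> 0\<^sub>v n" using nonzero w by (metis uminus_uminus_vec uminus_zero_vec)
  ultimately show False
    using nilpotent_mat_no_stable_set[OF q, of "{?w, - ?w}" ?w] qw nonzero w by auto
qed

lemma a_inv_ring_mat:
  assumes A: "A \<in> carrier_mat n n"
  shows "\<ominus>\<^bsub>ring_mat TYPE('a::ring_1) n b\<^esub> A = - A"
proof -
  let ?G = "add_monoid (ring_mat TYPE('a) n b)"
  have "m_inv ?G A = - A" unfolding m_inv_def
  proof (rule the_equality)
    show "- A \<in> carrier ?G \<and> A \<otimes>\<^bsub>?G\<^esub> - A = \<one>\<^bsub>?G\<^esub> \<and> - A \<otimes>\<^bsub>?G\<^esub> A = \<one>\<^bsub>?G\<^esub>"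
      using A by (auto simp: ring_mat_simps)
  next
    fix B assume "B \<in> carrier ?G \<and> A \<otimes>\<^bsub>?G\<^esub> B = \<one>\<^bsub>?G\<^esub> \<and> B \<otimes>\<^bsub>?G\<^esub> A = \<one>\<^bsub>?G\<^esub>"
    then have B: "B \<in> carrier_mat n n" and AB: "A + B = 0\<^sub>m n n" by (auto simp: ring_mat_simps)
    have "B = - A + (A + B)" using A B by (auto simp: add.assoc[symmetric])
    then show "B = - A" using A unfolding AB by simp
  qed
  then show ?thesis by (simp add: a_inv_def)
qed

lemma a_minus_ring_mat:
  assumes "A \<in> carrier_mat n n" "B \<in> carrier_mat n n"
  shows "A \<ominus>\<^bsub>ring_mat TYPE('a::ring_1) n b\<^esub> B = A - B"
  using assms unfolding a_minus_def a_inv_ring_mat[OF assms(2)]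
  by (auto simp: ring_mat_simps)

lemma Units_ring_mat:
  "A \<in> Units (ring_mat TYPE('a::semiring_1) n b) \<longleftrightarrow> A \<in> carrier_mat n n \<and> invertible_mat A"
proof
  assume "A \<in> Units (ring_mat TYPE('a) n b)"
  then show "A \<in> carrier_mat n n \<and> invertible_mat A"
    unfolding Units_def invertible_mat_def inverts_mat_def by (auto simp: ring_mat_simps)
next
  assume "A \<in> carrier_mat n n \<and> invertible_mat A"
  then obtain B where A: "A \<in> carrier_mat n n" and AB: "A * B = 1\<^sub>m n" and BA: "B * A = 1\<^sub>m (dim_row B)"
    unfolding invertible_mat_def inverts_mat_def by auto
  have "dim_row B = n" using arg_cong[OF BA, of dim_col] A by simp
  moreover have "dim_col B = n" using arg_cong[OF AB, of dim_col] by simp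
  ultimately show "A \<in> Units (ring_mat TYPE('a) n b)"
    using A AB BA unfolding Units_def by (auto simp: ring_mat_simps)
qed

lemma nilpotents_ring_mat:
  "q \<in> nilpotents (ring_mat TYPE('a::semiring_1) n b) \<longleftrightarrow> q \<in> carrier_mat n n \<and> nilpotent_mat n q"
  unfolding nilpotents_def nilpotent_mat_def
  by (auto simp: ring_mat_simps pow_mat_ring_pow[symmetric])

lemma idempotents_ring_mat:
  "e \<in> idempotents (ring_mat TYPE('a::semiring_1) n b) \<longleftrightarrow> e \<in> carrier_mat n n \<and> e * e = e"
  unfolding idempotents_def by (auto simp: ring_mat_simps)

lemma nil_clean_mat_or_uminus_iff:
  assumes A: "A \<in> carrier_mat n n"
  shows "(\<exists>q \<in> nilpotents (ring_mat TYPE('a::ring_1) n b). \<exists>e \<in> idempotents (ring_mat TYPE('a) n b).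
      A = q \<oplus>\<^bsub>ring_mat TYPE('a) n b\<^esub> e \<or> A = q \<ominus>\<^bsub>ring_mat TYPE('a) n b\<^esub> e)
    \<longleftrightarrow> nil_clean_mat n A \<or> nil_clean_mat n (- A)"
    (is "(\<exists>q \<in> nilpotents ?R. \<exists>e \<in> idempotents ?R. ?decomp q e) \<longleftrightarrow> _")
proof
  assume "\<exists>q \<in> nilpotents ?R. \<exists>e \<in> idempotents ?R. ?decomp q e"
  then obtain q e where q: "q \<in> carrier_mat n n" "nilpotent_mat n q"
    and e: "e \<in> carrier_mat n n" "e * e = e" and "A = q + e \<or> A = q - e"
    by (auto simp: nilpotents_ring_mat idempotents_ring_mat ring_mat_simps a_minus_ring_mat)
  then have "A = e + q \<or> - A = e + - q"
  proof (elim disjE)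
    assume "A = q - e"
    then show ?thesis using e(1) q(1) by (auto intro!: disjI2 eq_matI)
  qed (simp add: comm_add_mat[OF q(1) e(1)])
  then show "nil_clean_mat n A \<or> nil_clean_mat n (- A)"
    unfolding nil_clean_mat_def using q e nilpotent_mat_uminus[OF q] uminus_carrier_mat[OF q(1)]
    by blast
next
  assume "nil_clean_mat n A \<or> nil_clean_mat n (- A)"
  then obtain q e where q: "q \<in> carrier_mat n n" "nilpotent_mat n q"
    and e: "e \<in> carrier_mat n n" "e * e = e" and "A = e + q \<or> - A = e + q"
    unfolding nil_clean_mat_def by blast
  then have "A = q + e \<or> A = - q - e"
  proof (elim disjE)
    assume "- A = e + q"
    then have "A = - (e + q)" by (metis uminus_uminus_mat)
    then show ?thesis using e(1) q(1) by (auto intro!: eq_matI)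
  qed (use e(1) q(1) comm_add_mat in auto)
  moreover have "- q \<in> nilpotents ?R" "q \<in> nilpotents ?R" "e \<in> idempotents ?R"
    using q e nilpotent_mat_uminus[OF q]
    by (auto simp: nilpotents_ring_mat idempotents_ring_mat)
  moreover have "q \<oplus>\<^bsub>?R\<^esub> e = q + e" "- q \<ominus>\<^bsub>?R\<^esub> e = - q - e"
    using q(1) e(1) by (simp_all add: ring_mat_simps a_minus_ring_mat)
  ultimately show "\<exists>q \<in> nilpotents ?R. \<exists>e \<in> idempotents ?R. ?decomp q e"
    by metis
qed

lemma GWNC_ring_mat_iff:
  "GWNC (ring_mat TYPE('a::ring_1) n ()) \<longleftrightarrow>
    (\<forall>A :: 'a mat \<in> carrier_mat n n. \<not> invertible_mat A \<longrightarrow> nil_clean_mat n A \<or> nil_clean_mat n (- A))"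
  unfolding GWNC_def
proof (intro iffI ballI impI)
  let ?R = "ring_mat TYPE('a) n ()"
  fix A :: "'a mat"
  assume GWNC: "\<forall>A \<in> carrier ?R - Units ?R.
      \<exists>q \<in> nilpotents ?R. \<exists>e \<in> idempotents ?R. A = q \<oplus>\<^bsub>?R\<^esub> e \<or> A = q \<ominus>\<^bsub>?R\<^esub> e"
    and A: "A \<in> carrier_mat n n" "\<not> invertible_mat A"
  from A have "A \<in> carrier ?R - Units ?R" by (simp add: Units_ring_mat ring_mat_simps(5))
  with GWNC have "\<exists>q \<in> nilpotents ?R. \<exists>e \<in> idempotents ?R. A = q \<oplus>\<^bsub>?R\<^esub> e \<or> A = q \<ominus>\<^bsub>?R\<^esub> e"
    by (rule bspec)
  then show "nil_clean_mat n A \<or> nil_clean_mat n (- A)" by (simp only: nil_clean_mat_or_uminus_iff[OF A(1)])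
next
  let ?R = "ring_mat TYPE('a) n ()"
  fix A :: "'a mat"
  assume H: "\<forall>A :: 'a mat \<in> carrier_mat n n. \<not> invertible_mat A \<longrightarrow> nil_clean_mat n A \<or> nil_clean_mat n (- A)"
    and "A \<in> carrier ?R - Units ?R"
  then have A: "A \<in> carrier_mat n n" "\<not> invertible_mat A" by (simp_all add: Units_ring_mat ring_mat_simps(5))
  with H have "nil_clean_mat n A \<or> nil_clean_mat n (- A)" by blast
  then show "\<exists>q \<in> nilpotents ?R. \<exists>e \<in> idempotents ?R. A = q \<oplus>\<^bsub>?R\<^esub> e \<or> A = q \<ominus>\<^bsub>?R\<^esub> e"
    by (simp only: nil_clean_mat_or_uminus_iff[OF A(1)])
qed

lemma num2_cases: "(x::2) = 0 \<or> x = 1"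
proof (induct x)
  case (of_int z)
  then have "z = 0 \<or> z = 1" by auto
  then show ?case by auto
qed

lemma num3_cases: "(x::3) = 0 \<or> x = 1 \<or> x = -1"
proof (induct x)
  case (of_int z)
  then have "z = 0 \<or> z = 1 \<or> z = 2" by auto
  moreover have "(of_int 2 :: 3) = -1" by simp
  ultimately show ?case by auto
qed

lemma ring_iso_ty_zero_uminus:
  assumes "ring_iso_ty (f :: 'a::ring_1 \<Rightarrow> 'b::ring_1)"
  shows "f 0 = 0" and "f (- x) = - f x"
proof -
  have add: "\<And>x y. f (x + y) = f x + f y" using assms unfolding ring_iso_ty_def by auto
  show "f 0 = 0" using add[of 0 0] by simp
  then have "f x + f (- x) = 0" using add[of x "- x"] by simp
  then show "f (- x) = - f x" by (simp add: add_eq_0_iff)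
qed

lemma ring_iso_ty_2_iff:
  "(\<exists>f :: 'a::ring_1 \<Rightarrow> 2. ring_iso_ty f) \<longleftrightarrow> (\<forall>x::'a. x = 0 \<or> x = 1) \<and> (1::'a) + 1 = 0"
proof
  assume "\<exists>f :: 'a \<Rightarrow> 2. ring_iso_ty f"
  then obtain f :: "'a \<Rightarrow> 2" where f: "ring_iso_ty f" ..
  then have inj: "inj f" and f1: "f 1 = 1" and add: "\<And>x y. f (x + y) = f x + f y"
    unfolding ring_iso_ty_def bij_def by auto
  have f0: "f 0 = 0" using ring_iso_ty_zero_uminus[OF f] by simp
  have "x = 0 \<or> x = 1" for x :: 'a using num2_cases[of "f x"] inj f0 f1 by (metis injD)
  moreover have "f (1 + 1) = f 0" using add[of 1 1] f0 f1 by simp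
  then have "(1::'a) + 1 = 0" by (rule injD[OF inj])
  ultimately show "(\<forall>x::'a. x = 0 \<or> x = 1) \<and> (1::'a) + 1 = 0" by blast
next
  assume "(\<forall>x::'a. x = 0 \<or> x = 1) \<and> (1::'a) + 1 = 0"
  then have cases: "\<And>x::'a. x = 0 \<or> x = 1" and two: "(1::'a) + 1 = 0" by auto
  define f :: "'a \<Rightarrow> 2" where "f x = (if x = 0 then 0 else 1)" for x
  have "bij f"
  proof (rule bijI)
    show "inj f" unfolding f_def inj_def using cases by auto
    have "f 0 = 0" "f 1 = 1" by (simp_all add: f_def)
    then show "surj f" using num2_cases by (metis surj_def)
  qed
  moreover have "f (x + y) = f x + f y" "f (x * y) = f x * f y" for x y
    using cases[of x] cases[of y] two unfolding f_def by auto
  ultimately show "\<exists>f :: 'a \<Rightarrow> 2. ring_iso_ty f" unfolding ring_iso_ty_def f_def by auto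
qed

lemma ring_iso_ty_3_iff:
  "(\<exists>f :: 'a::ring_1 \<Rightarrow> 3. ring_iso_ty f) \<longleftrightarrow>
     (\<forall>x::'a. x = 0 \<or> x = 1 \<or> x = -1) \<and> (1::'a) \<noteq> -1"
proof
  assume "\<exists>f :: 'a \<Rightarrow> 3. ring_iso_ty f"
  then obtain f :: "'a \<Rightarrow> 3" where f: "ring_iso_ty f" ..
  then have inj: "inj f" and f1: "f 1 = 1"
    unfolding ring_iso_ty_def bij_def by auto
  have f0: "f 0 = 0" and fm1: "f (-1) = -1" using ring_iso_ty_zero_uminus[OF f] f1 by auto
  have "x = 0 \<or> x = 1 \<or> x = -1" for x :: 'a using num3_cases[of "f x"] inj f0 f1 fm1 by (metis injD)
  moreover have "(1::'a) \<noteq> -1" using f1 fm1 by force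
  ultimately show "(\<forall>x::'a. x = 0 \<or> x = 1 \<or> x = -1) \<and> (1::'a) \<noteq> -1" by blast
next
  assume "(\<forall>x::'a. x = 0 \<or> x = 1 \<or> x = -1) \<and> (1::'a) \<noteq> -1"
  then have cases: "\<And>x::'a. x = 0 \<or> x = 1 \<or> x = -1" and one: "(1::'a) \<noteq> -1" by auto
  have "(1::'a) + 1 \<noteq> 0" using one by (metis add_eq_0_iff)
  moreover have "(1::'a) + 1 \<noteq> 1" by (metis add_cancel_right_right one_neq_zero)
  ultimately have two: "(1::'a) + 1 = -1" using cases by blast
  define f :: "'a \<Rightarrow> 3" where "f x = (if x = 0 then 0 else if x = 1 then 1 else -1)" for x
  have "bij f"
  proof (rule bijI)
    show "inj f" unfolding f_def inj_def using cases one by auto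
    have "f 0 = 0" "f 1 = 1" "f (-1) = -1" using one by (simp_all add: f_def)
    then show "surj f" using num3_cases by (metis surj_def)
  qed
  moreover have "f (x + y) = f x + f y" for x y
  proof -
    have two': "(2::'a) = -1" and minus_two: "(-2::'a) = 1"
      using two by (simp_all add: minus_equation_iff)
    show ?thesis using cases[of x] cases[of y] one unfolding f_def
      by (elim disjE) (simp_all add: two' minus_two)
  qed
  moreover have "f (x * y) = f x * f y" for x y
    using cases[of x] cases[of y] one unfolding f_def by auto
  ultimately show "\<exists>f :: 'a \<Rightarrow> 3. ring_iso_ty f" unfolding ring_iso_ty_def f_def by auto
qed

lemma mult_commute_if_trivial_elements:
  assumes "\<forall>x::'a::ring_1. x = 0 \<or> x = 1 \<or> x = -1"
  shows "(x::'a) * y = y * x"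
  using assms by (metis mult.left_neutral mult.right_neutral mult_minus_left mult_minus_right mult_zero_left mult_zero_right)

section \<open>Coefficients outside {0, 1, -1}\<close>

lemma pow_mat_diag: "mat_diag n f ^\<^sub>m k = mat_diag n (\<lambda>i. f i ^ k)"
proof (induction k)
  case 0
  then show ?case by (simp add: mat_diag_def[of n f] mat_diag_one[symmetric] del: mat_diag_one)
next
  case (Suc k)
  then show ?case by (simp add: power_commutes)
qed

lemma mat_diag_not_nilpotent:
  fixes f :: "nat \<Rightarrow> 'a::ring_1_no_zero_divisors"
  assumes "i < n" "f i \<noteq> 0"
  shows "\<not> nilpotent_mat n (mat_diag n f)"
proof
  assume "nilpotent_mat n (mat_diag n f)"
  then obtain k where "mat_diag n (\<lambda>i. f i ^ k) = 0\<^sub>m n n"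
    unfolding nilpotent_mat_def pow_mat_diag by blast
  then have "mat_diag n (\<lambda>i. f i ^ k) $$ (i, i) = 0" using assms(1) by simp
  with assms show False by (simp add: mat_diag_def)
qed

lemma mat_diag_not_invertible:
  assumes "i < n" "f i = 0"
  shows "\<not> invertible_mat (mat_diag n (f :: nat \<Rightarrow> 'a::semiring_1))"
proof
  assume "invertible_mat (mat_diag n f)"
  then obtain B where "mat_diag n f * B = 1\<^sub>m n" and B: "B \<in> carrier_mat n n"
    unfolding invertible_mat_def inverts_mat_def square_mat.simps
    by (metis carrier_matI index_mult_mat(2,3) index_one_mat(2,3) mat_diag_dim carrier_matD)
  then have "(mat_diag n f * B) $$ (i, i) = 1" using assms(1) by simp
  moreover have "(mat_diag n f * B) $$ (i, i) = 0"
    using assms B by (simp add: mat_diag_mult_left)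
  ultimately show False by simp
qed

lemma uminus_mat_diag: "- mat_diag n f = mat_diag n (\<lambda>i. - f i :: 'a::group_add)"
  by (rule eq_matI) (auto simp: mat_diag_def)

lemma mat_diag_mult_vec:
  assumes "v \<in> carrier_vec n"
  shows "mat_diag n f *\<^sub>v v = vec n (\<lambda>i. f i * v $ i)"
proof (rule eq_vecI)
  fix i assume "i < dim_vec (vec n (\<lambda>i. f i * v $ i))"
  then have i: "i < n" by simp
  have "(mat_diag n f *\<^sub>v v) $ i = (\<Sum>j \<in> {0..<n}. (if i = j then f j else 0) * v $ j)"
    using i assms by (simp add: mat_diag_def scalar_prod_def)
  also have "\<dots> = f i * v $ i" using i by (simp add: if_distrib[of "\<lambda>x. x * _"] cong: if_cong)
  finally show "(mat_diag n f *\<^sub>v v) $ i = vec n (\<lambda>i. f i * v $ i) $ i" using i by simp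
qed (simp add: mat_diag_def)

lemma nil_clean_mat_corner_coords:
  fixes a :: "'a::ring_1"
  assumes n: "0 < n" and decomp: "mat_diag n (\<lambda>i. if i = 0 then a else 0) = e + q"
    and e: "e \<in> carrier_mat n n" "e * e = e" and q: "q \<in> carrier_mat n n" and y: "y \<in> carrier_vec n"
  shows "(q *\<^sub>v y) $ 0 = a * y $ 0 - (e *\<^sub>v y) $ 0"
    and "(e *\<^sub>v (q *\<^sub>v y)) $ 0 = e $$ (0, 0) * (a * y $ 0) - (e *\<^sub>v y) $ 0"
proof -
  define A where "A = mat_diag n (\<lambda>i. if i = 0 then a else 0)"
  have A: "A \<in> carrier_mat n n" by (simp add: A_def)
  have A_eq: "A = e + q" using decomp by (simp add: A_def)
  have Ay: "A *\<^sub>v y = vec n (\<lambda>i. if i = 0 then a * y $ 0 else 0)" if "y \<in> carrier_vec n" for y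
    unfolding A_def mat_diag_mult_vec[OF that] by (intro eq_vecI) auto
  have qy: "q *\<^sub>v y = A *\<^sub>v y - e *\<^sub>v y"
    using add_mult_distrib_mat_vec[OF e(1) q(1) y] A_eq e(1) q(1) y by auto
  show "(q *\<^sub>v y) $ 0 = a * y $ 0 - (e *\<^sub>v y) $ 0"
    using n y e(1) by (simp add: qy Ay)
  show "(e *\<^sub>v (q *\<^sub>v y)) $ 0 = e $$ (0, 0) * (a * y $ 0) - (e *\<^sub>v y) $ 0"
  proof -
    have "e *\<^sub>v (q *\<^sub>v y) = e *\<^sub>v (A *\<^sub>v y) - e *\<^sub>v (e *\<^sub>v y)"
      unfolding qy using e(1) A y by (simp add: mult_minus_distrib_mat_vec)
    also have "e *\<^sub>v (e *\<^sub>v y) = e *\<^sub>v y" using e y by (simp flip: assoc_mult_mat_vec)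
    finally have "e *\<^sub>v (q *\<^sub>v y) = e *\<^sub>v (A *\<^sub>v y) - e *\<^sub>v y" .
    moreover have "(e *\<^sub>v (A *\<^sub>v y)) $ 0 = e $$ (0, 0) * (a * y $ 0)"
    proof -
      have "(e *\<^sub>v (A *\<^sub>v y)) $ 0 = (\<Sum>j \<in> {0..<n}. e $$ (0, j) * (if j = 0 then a * y $ 0 else 0))"
        using n e(1) y by (simp add: Ay scalar_prod_def)
      also have "\<dots> = e $$ (0, 0) * (a * y $ 0)" using n by (simp add: if_distrib cong: if_cong)
      finally show ?thesis .
    qed
    ultimately show ?thesis using n e(1) A y by simp
  qed
qed

lemma not_nil_clean_mat_corner:
  fixes a :: "'a::ring_1_no_zero_divisors"
  assumes n: "0 < n" and a: "a \<noteq> 0" "a \<noteq> 1"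
  shows "\<not> nil_clean_mat n (mat_diag n (\<lambda>i. if i = 0 then a else 0))"
proof
  define A where "A = mat_diag n (\<lambda>i. if i = 0 then a else 0)"
  assume "nil_clean_mat n (mat_diag n (\<lambda>i. if i = 0 then a else 0))"
  then obtain e q where e: "e \<in> carrier_mat n n" "e * e = e"
    and q: "q \<in> carrier_mat n n" "nilpotent_mat n q" and A_eq: "A = e + q"
    unfolding nil_clean_mat_def A_def by blast
  note step0 = nil_clean_mat_corner_coords(1)[OF n A_eq[unfolded A_def] e q(1)]
    and step1 = nil_clean_mat_corner_coords(2)[OF n A_eq[unfolded A_def] e q(1)]
  define u :: "'a vec" where "u = unit_vec n 0"
  have u: "u \<in> carrier_vec n" "u $ 0 = 1" "(e *\<^sub>v u) $ 0 = e $$ (0, 0)"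
    using n e(1) by (auto simp: u_def)
  show False
  proof (cases "e $$ (0, 0) = 1")
    case True
    let ?S = "{y \<in> carrier_vec n. y $ 0 \<noteq> 0 \<and> (e *\<^sub>v y) $ 0 = y $ 0}"
    have "q *\<^sub>v y \<in> ?S" if "y \<in> ?S" for y
    proof -
      have "(q *\<^sub>v y) $ 0 = (a - 1) * y $ 0" using that step0[of y] by (simp add: algebra_simps)
      moreover have "(e *\<^sub>v (q *\<^sub>v y)) $ 0 = (a - 1) * y $ 0"
        using that step1[of y] True by (simp add: algebra_simps)
      moreover have "(a - 1) * y $ 0 \<noteq> 0" using that a by simp
      ultimately show ?thesis using that q(1) by simp
    qed
    then show False using nilpotent_mat_no_stable_set[OF q, of ?S u] u True n by auto
  next
    case False
    let ?S = "{y \<in> carrier_vec n. y $ 0 \<noteq> 0 \<or> (e *\<^sub>v y) $ 0 \<noteq> 0}"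
    have "q *\<^sub>v y \<in> ?S" if "y \<in> ?S" for y
    proof (rule ccontr)
      assume "q *\<^sub>v y \<notin> ?S"
      then have "a * y $ 0 = (e *\<^sub>v y) $ 0" "e $$ (0, 0) * (a * y $ 0) = (e *\<^sub>v y) $ 0"
        using that q(1) step0 step1 by auto
      then have "(e $$ (0, 0) - 1) * (a * y $ 0) = 0" by (simp add: algebra_simps)
      then have "y $ 0 = 0" using False a by simp
      then show False using that \<open>a * y $ 0 = (e *\<^sub>v y) $ 0\<close> by simp
    qed
    then show False using nilpotent_mat_no_stable_set[OF q, of ?S u] u n e(1) by auto
  qed
qed

lemma GWNC_ring_mat_trivial_elements:
  fixes x :: "'a::ring_1_no_zero_divisors"
  assumes n: "2 \<le> n" and GWNC: "GWNC (ring_mat TYPE('a) n ())"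
  shows "x = 0 \<or> x = 1 \<or> x = -1"
proof (rule ccontr)
  assume "\<not> ?thesis"
  then have x: "x \<noteq> 0" "x \<noteq> 1" "- x \<noteq> 0" "- x \<noteq> 1" by (auto simp: minus_equation_iff)
  let ?A = "mat_diag n (\<lambda>i. if i = 0 then x else 0)"
  have "- ?A = mat_diag n (\<lambda>i. if i = 0 then - x else 0)"
    unfolding uminus_mat_diag by (rule arg_cong[of _ _ "mat_diag n"]) auto
  then have "\<not> nil_clean_mat n ?A" "\<not> nil_clean_mat n (- ?A)"
    using not_nil_clean_mat_corner[of n x] not_nil_clean_mat_corner[of n "- x"] x n by auto
  moreover have "\<not> invertible_mat ?A" using n by (intro mat_diag_not_invertible[of 1]) auto
  ultimately show False using GWNC unfolding GWNC_ring_mat_iff using mat_diag_dim by blast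
qed

section \<open>Transvections and traces\<close>

definition transvection :: "nat \<Rightarrow> 'a::ring_1 vec \<Rightarrow> nat \<Rightarrow> 'a mat" where
  "transvection n w i = mat n n (\<lambda>(a, b). (if a = b then 1 else 0) + (if b = i then w $ a else 0))"

lemma transvection_carrier [simp]: "transvection n w i \<in> carrier_mat n n"
  unfolding transvection_def by simp

lemma dim_transvection [simp]: "dim_row (transvection n w l) = n" "dim_col (transvection n w l) = n"
  by (simp_all add: transvection_def)

lemma transvection_mult_vec:
  assumes "w \<in> carrier_vec n" "y \<in> carrier_vec n" "i < n"
  shows "transvection n w i *\<^sub>v y = vec n (\<lambda>a. y $ a + w $ a * y $ i)"
proof (rule eq_vecI)
  fix a assume "a < dim_vec (vec n (\<lambda>a. y $ a + w $ a * y $ i))"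
  then have a: "a < n" by simp
  have "(transvection n w i *\<^sub>v y) $ a
      = (\<Sum>b \<in> {0..<n}. (if a = b then y $ b else 0) + (if b = i then w $ a * y $ b else 0))"
    using a assms unfolding transvection_def
    by (auto simp: scalar_prod_def distrib_right intro!: sum.cong)
  also have "\<dots> = y $ a + w $ a * y $ i" using a assms by (simp add: sum.distrib)
  finally show "(transvection n w i *\<^sub>v y) $ a = vec n (\<lambda>a. y $ a + w $ a * y $ i) $ a"
    using a by simp
qed (simp add: transvection_def)

lemma transvection_mult_unit_vec:
  assumes "w \<in> carrier_vec n" "i < n" "j < n"
  shows "transvection n w i *\<^sub>v unit_vec n j = (if j = i then w + unit_vec n i else unit_vec n j)"
  using assms by (auto simp: transvection_mult_vec intro!: eq_vecI)

lemma transvection_fixes_unit_vec: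
  assumes "w \<in> carrier_vec n" "i < n" "j < n" "j \<noteq> i"
  shows "transvection n w i *\<^sub>v unit_vec n j = unit_vec n j"
  using assms by (simp add: transvection_mult_unit_vec)

lemma transvection_inverse:
  assumes w: "w \<in> carrier_vec n" and i: "i < n" "w $ i = 0"
  shows "transvection n w i * transvection n (- w) i = 1\<^sub>m n"
proof (rule mat_eq_by_unit_vecs[of _ n n])
  fix j assume j: "j < n"
  have "(transvection n w i * transvection n (- w) i) *\<^sub>v unit_vec n j
      = transvection n w i *\<^sub>v (transvection n (- w) i *\<^sub>v unit_vec n j)"
    by (rule assoc_mult_mat_vec[of _ n n _ n]) auto
  also have "\<dots> = unit_vec n j"
    using w i j by (auto simp: transvection_mult_vec intro!: eq_vecI)
  finally show "(transvection n w i * transvection n (- w) i) *\<^sub>v unit_vec n j = 1\<^sub>m n *\<^sub>v unit_vec n j"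
    by simp
qed simp_all

lemma similar_mat_wit_transvection_conj:
  assumes "A \<in> carrier_mat n n" "w \<in> carrier_vec n" "i < n" "w $ i = 0"
  shows "similar_mat_wit A (transvection n (- w) i * A * transvection n w i)
    (transvection n w i) (transvection n (- w) i)"
  using assms transvection_inverse[of w n i] transvection_inverse[of "- w" n i]
  by (intro similar_mat_wit_conjugate) auto

lemma transvection_conj_mult_unit_vec:
  assumes A: "(A :: 'a::ring_1 mat) \<in> carrier_mat n n" and w: "w \<in> carrier_vec n"
    and ij: "i < n" "j < n" "j \<noteq> i"
  shows "(transvection n (- w) i * A * transvection n w i) *\<^sub>v unit_vec n j
    = transvection n (- w) i *\<^sub>v (A *\<^sub>v unit_vec n j)"
  using A w ij by (simp add: assoc_mult_mat_vec[of _ n n _ n] transvection_fixes_unit_vec)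

lemma index_mult_transvection_right:
  assumes M: "(M :: 'a::ring_1 mat) \<in> carrier_mat n n" and w: "w \<in> carrier_vec n"
    and ij: "l < n" "i < n" "j < n"
  shows "(M * transvection n w l) $$ (i, j) = M $$ (i, j) + (if j = l then (M *\<^sub>v w) $ i else 0)"
proof -
  have "col (transvection n w l) j = (if j = l then w + unit_vec n l else unit_vec n j)"
    using w ij by (simp flip: mult_mat_vec_unit_vec[of _ n n] add: transvection_mult_unit_vec)
  then show ?thesis
    using M w ij by (auto simp: scalar_prod_add_distrib[of _ n] add.commute)
qed

lemma index_transvection_mult:
  assumes "(M :: 'a::ring_1 mat) \<in> carrier_mat n m" "w \<in> carrier_vec n" "l < n" "i < n" "j < m"
  shows "(transvection n w l * M) $$ (i, j) = M $$ (i, j) + w $ i * M $$ (l, j)"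
  using assms
  by (auto simp: transvection_def scalar_prod_def distrib_right sum.distrib if_distrib[of "\<lambda>x. x * _"]
      cong: if_cong)

definition mat_trace :: "'a::comm_monoid_add mat \<Rightarrow> 'a" where
  "mat_trace A = (\<Sum>i<dim_row A. A $$ (i, i))"

lemma mat_trace_add:
  assumes "A \<in> carrier_mat n n" "B \<in> carrier_mat n n"
  shows "mat_trace (A + B) = mat_trace A + mat_trace B"
  using assms by (simp add: mat_trace_def sum.distrib)

lemma mat_trace_mult_comm:
  assumes comm: "\<And>x y :: 'a::semiring_0. x * y = y * x"
    and A: "(A :: 'a mat) \<in> carrier_mat n m" and B: "B \<in> carrier_mat m n"
  shows "mat_trace (A * B) = mat_trace (B * A)"
proof -
  have "mat_trace (A * B) = (\<Sum>i<n. \<Sum>l<m. A $$ (i, l) * B $$ (l, i))"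
    unfolding mat_trace_def using A B by (simp add: scalar_prod_def lessThan_atLeast0)
  also have "\<dots> = (\<Sum>l<m. \<Sum>i<n. B $$ (l, i) * A $$ (i, l))"
    by (subst sum.swap) (simp add: comm)
  also have "\<dots> = mat_trace (B * A)"
    unfolding mat_trace_def using A B by (simp add: scalar_prod_def lessThan_atLeast0)
  finally show ?thesis .
qed

lemma mat_trace_similar:
  assumes comm: "\<And>x y :: 'a::semiring_1. x * y = y * x"
    and sim: "similar_mat_wit (A :: 'a mat) B P Q"
  shows "mat_trace A = mat_trace B"
proof -
  obtain n where B: "B \<in> carrier_mat n n" and P: "P \<in> carrier_mat n n" and Q: "Q \<in> carrier_mat n n"
    and QP: "Q * P = 1\<^sub>m n" and A: "A = P * B * Q"
    using sim unfolding similar_mat_wit_def Let_def by auto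
  have "mat_trace A = mat_trace (P * (B * Q))" using A B P Q by (simp add: assoc_mult_mat[of _ n n _ n _ n])
  also have "\<dots> = mat_trace ((B * Q) * P)" using B Q by (intro mat_trace_mult_comm[OF comm P]) simp
  also have "B * Q * P = B" using B P Q QP by (simp add: assoc_mult_mat[of _ n n _ n _ n])
  finally show ?thesis .
qed

lemma exists_nonzero_kernel_vec:
  assumes N: "(N :: 'a::ring_1 mat) \<in> carrier_mat n n" "nilpotent_mat n N" and n: "0 < n"
  obtains v where "v \<in> carrier_vec n" "v \<noteq> 0\<^sub>v n" "N *\<^sub>v v = 0\<^sub>v n"
proof -
  let ?S = "carrier_vec n - {0\<^sub>v n}"
  have "\<exists>v \<in> ?S. N *\<^sub>v v \<notin> ?S"
  proof (rule ccontr)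
    assume "\<not> ?thesis"
    then show False
      using nilpotent_mat_no_stable_set[OF N, of ?S "unit_vec n 0"] n by auto
  qed
  then show ?thesis using that N(1) by auto
qed

lemma similar_first_column_zero:
  fixes N :: "'a::division_ring mat"
  assumes N: "N \<in> carrier_mat n n" "nilpotent_mat n N" and n: "0 < n"
  obtains N' P Q where "similar_mat_wit N N' P Q" "N' *\<^sub>v unit_vec n 0 = 0\<^sub>v n"
proof -
  obtain v where v: "v \<in> carrier_vec n" "v \<noteq> 0\<^sub>v n" "N *\<^sub>v v = 0\<^sub>v n"
    using exists_nonzero_kernel_vec[OF N n] .
  obtain i where i: "i < n" "v $ i \<noteq> 0" using v(1,2) by (metis eq_vecI carrier_vecD index_zero_vec)
  define v' where "v' = vec n (\<lambda>j. v $ j * inverse (v $ i))"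
  have v': "v' \<in> carrier_vec n" "v' $ i = 1" "N *\<^sub>v v' = 0\<^sub>v n"
    using i v N(1) by (auto simp: v'_def mult_mat_vec_right_scale)
  define w where "w = v' - unit_vec n i"
  have w: "w \<in> carrier_vec n" "w $ i = 0" using v' i by (auto simp: w_def)
  define R where "R = transvection n w i"
  define R' where "R' = transvection n (- w) i"
  define S :: "'a mat" where "S = swaprows_mat n 0 i"
  have carrier: "R \<in> carrier_mat n n" "R' \<in> carrier_mat n n" "S \<in> carrier_mat n n"
    by (simp_all add: R_def R'_def S_def)
  have inv: "R * R' = 1\<^sub>m n" "R' * R = 1\<^sub>m n" "S * S = 1\<^sub>m n"
    using transvection_inverse[OF w(1) i(1) w(2)] transvection_inverse[of "- w" n i] w i n
    by (auto simp: R_def R'_def S_def swaprows_mat_inv)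
  have sim: "similar_mat_wit N (S * (R' * N * R) * S) (R * S) (S * R')"
    using similar_mat_wit_trans[OF similar_mat_wit_conjugate[OF N(1) carrier(1,2) inv(1,2)]
        similar_mat_wit_conjugate[OF _ carrier(3,3) inv(3,3)]] N(1) carrier by simp
  have "S *\<^sub>v unit_vec n 0 = unit_vec n i"
    using n i by (simp add: S_def mult_mat_vec_unit_vec[of _ n n] col_swaprows)
  moreover have "R *\<^sub>v unit_vec n i = v'"
    using w v' i by (auto simp: R_def transvection_mult_unit_vec w_def)
  ultimately have "(S * (R' * N * R) * S) *\<^sub>v unit_vec n 0 = S *\<^sub>v (R' *\<^sub>v (N *\<^sub>v v'))"
    using N(1) carrier by (simp add: assoc_mult_mat_vec[of _ n n _ n])
  also have "\<dots> = 0\<^sub>v n" using v' carrier by simp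
  finally show ?thesis using that sim by blast
qed

lemma mat_trace_nilpotent:
  assumes comm: "\<And>x y :: 'a::division_ring. x * y = y * x"
  shows "(N :: 'a mat) \<in> carrier_mat n n \<Longrightarrow> nilpotent_mat n N \<Longrightarrow> mat_trace N = 0"
proof (induction n arbitrary: N)
  case 0
  then show ?case by (simp add: mat_trace_def)
next
  case (Suc m)
  obtain N' P Q where sim: "similar_mat_wit N N' P Q" and col0: "N' *\<^sub>v unit_vec (Suc m) 0 = 0\<^sub>v (Suc m)"
    using similar_first_column_zero[OF Suc.prems] by blast
  have N': "N' \<in> carrier_mat (1 + m) (1 + m)" using similar_mat_witD2[OF Suc.prems(1) sim] by simp
  have "nilpotent_mat (Suc m) N'" by (rule nilpotent_mat_similar[OF sim Suc.prems])
  then obtain k where k: "N' ^\<^sub>m k = 0\<^sub>m (1 + m) (1 + m)" unfolding nilpotent_mat_def by auto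
  have col: "N' $$ (r, 0) = 0" if "r < 1 + m" for r
    using arg_cong[OF col0, of "\<lambda>v. v $ r"] N' that by simp
  obtain N1 N2 N3 N4 where split: "split_block N' 1 1 = (N1, N2, N3, N4)" by (metis prod_cases4)
  have "dim_row N' = 1 + m" "dim_col N' = 1 + m" using N' by auto
  note blocks = split_block[OF split this]
  have N3: "N3 = 0\<^sub>m m 1" and N1: "N1 = 0\<^sub>m 1 1"
    using split col N' unfolding split_block_def Let_def by (auto intro!: eq_matI)
  have N'_eq: "N' = four_block_mat N1 N2 (0\<^sub>m m 1) N4" using blocks N3 by simp
  obtain Y where Y: "Y \<in> carrier_mat 1 m"
    and pow: "N' ^\<^sub>m k = four_block_mat (N1 ^\<^sub>m k) Y (0\<^sub>m m 1) (N4 ^\<^sub>m k)"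
    using pow_four_block_mat_upper[OF blocks(1,2,4), of k] N'_eq by metis
  have "N4 ^\<^sub>m k = 0\<^sub>m m m"
  proof (rule eq_matI)
    fix r c assume "r < dim_row (0\<^sub>m m m :: 'a mat)" "c < dim_col (0\<^sub>m m m :: 'a mat)"
    then have r: "r < m" and c: "c < m" by auto
    have "(N4 ^\<^sub>m k) $$ (r, c) = four_block_mat (N1 ^\<^sub>m k) Y (0\<^sub>m m 1) (N4 ^\<^sub>m k) $$ (Suc r, Suc c)"
      using r c Y blocks(1,4) by simp
    also have "\<dots> = 0" unfolding pow[symmetric] k using r c by simp
    finally show "(N4 ^\<^sub>m k) $$ (r, c) = 0\<^sub>m m m $$ (r, c)" using r c by simp
  qed (use blocks in auto)
  then have "mat_trace N4 = 0"
    using Suc.IH blocks unfolding nilpotent_mat_def by blast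
  moreover have "mat_trace N' = N' $$ (0, 0) + mat_trace N4"
  proof -
    have "mat_trace N' = (\<Sum>r<Suc m. N' $$ (r, r))" unfolding mat_trace_def using N' by simp
    also have "\<dots> = N' $$ (0, 0) + (\<Sum>r<m. N' $$ (Suc r, Suc r))" by (rule sum.lessThan_Suc_shift)
    also have "(\<Sum>r<m. N' $$ (Suc r, Suc r)) = mat_trace N4"
      using split N' unfolding mat_trace_def split_block_def Let_def by auto
    finally show ?thesis .
  qed
  ultimately have "mat_trace N' = 0" using col[of 0] by simp
  then show ?case using mat_trace_similar[OF comm sim] by simp
qed

lemma idempotent_fixed_vec:
  fixes e :: "'a::division_ring mat"
  assumes e: "e \<in> carrier_mat n n" "e * e = e" and ij: "i < n" "j < n" "e $$ (i, j) \<noteq> 0"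
  obtains x where "x \<in> carrier_vec n" "e *\<^sub>v x = x" "x $ i = 1"
proof -
  let ?c = "e *\<^sub>v unit_vec n j"
  define x where "x = vec n (\<lambda>a. ?c $ a * inverse (e $$ (i, j)))"
  have "e *\<^sub>v ?c = ?c" using e by (simp flip: assoc_mult_mat_vec)
  then have "e *\<^sub>v x = x" using e by (simp add: x_def mult_mat_vec_right_scale)
  moreover have "x $ i = 1" using e ij by (simp add: x_def)
  moreover have "x \<in> carrier_vec n" by (simp add: x_def)
  ultimately show ?thesis using that by blast
qed

lemma idempotent_remove_rank_one:
  fixes e :: "'a::division_ring mat"
  assumes e: "e \<in> carrier_mat n n" "e * e = e"
    and x: "x \<in> carrier_vec n" "e *\<^sub>v x = x" "x $ i = 1" and i: "i < n"
  defines "e' \<equiv> mat n n (\<lambda>(a, b). e $$ (a, b) - x $ a * e $$ (i, b))"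
  shows "e' \<in> carrier_mat n n" and "e' * e' = e'"
    and "\<And>y. y \<in> carrier_vec n \<Longrightarrow> e *\<^sub>v (e' *\<^sub>v y) = e' *\<^sub>v y"
    and "\<And>y. y \<in> carrier_vec n \<Longrightarrow> (e' *\<^sub>v y) $ i = 0"
    and "(\<And>a b :: 'a. a * b = b * a) \<Longrightarrow> mat_trace e = mat_trace e' + 1"
proof -
  show e': "e' \<in> carrier_mat n n" by (simp add: e'_def)
  have e'y: "e' *\<^sub>v y = vec n (\<lambda>a. (e *\<^sub>v y) $ a - x $ a * (e *\<^sub>v y) $ i)"
    if y: "y \<in> carrier_vec n" for y
    using e y i unfolding e'_def
    by (intro eq_vecI) (auto simp: scalar_prod_def sum_subtractf sum_distrib_left left_diff_distrib mult.assoc)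
  have eey: "e *\<^sub>v (e *\<^sub>v y) = e *\<^sub>v y" if "y \<in> carrier_vec n" for y
    using e that by (simp flip: assoc_mult_mat_vec)
  show in_image: "e *\<^sub>v (e' *\<^sub>v y) = e' *\<^sub>v y" if y: "y \<in> carrier_vec n" for y
    using e x y unfolding e'y[OF y]
    by (simp add: mult_mat_vec_minus_right_scale eey)
  show coord: "(e' *\<^sub>v y) $ i = 0" if y: "y \<in> carrier_vec n" for y
    using x i by (simp add: e'y[OF y])
  show "e' * e' = e'"
  proof (rule mat_eq_by_unit_vecs[of _ n n])
    fix j assume j: "j < n"
    let ?z = "e' *\<^sub>v unit_vec n j"
    have z: "?z \<in> carrier_vec n" using e' by simp
    have "(e' * e') *\<^sub>v unit_vec n j = e' *\<^sub>v ?z" using e' by simp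
    also have "\<dots> = ?z"
    proof (rule eq_vecI)
      fix a assume "a < dim_vec ?z"
      then show "(e' *\<^sub>v ?z) $ a = ?z $ a" using e' z
        by (simp add: e'y[OF z] in_image[OF unit_vec_carrier] coord[OF unit_vec_carrier])
    qed (use e' in simp)
    finally show "(e' * e') *\<^sub>v unit_vec n j = e' *\<^sub>v unit_vec n j" .
  qed (use e' in auto)
  assume comm: "\<And>a b :: 'a. a * b = b * a"
  have "mat_trace e' = (\<Sum>a<n. e $$ (a, a)) - (\<Sum>a<n. e $$ (i, a) * x $ a)"
    unfolding mat_trace_def e'_def by (simp add: sum_subtractf comm)
  also have "(\<Sum>a<n. e $$ (i, a) * x $ a) = (e *\<^sub>v x) $ i"
    using e(1) x(1) i by (simp add: scalar_prod_def lessThan_atLeast0)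
  finally show "mat_trace e = mat_trace e' + 1"
    using e(1) x(2,3) unfolding mat_trace_def by simp
qed

(* The trace of an idempotent is its rank, which the last hypothesis bounds by card I. *)
lemma mat_trace_idempotent:
  fixes e :: "'a::division_ring mat"
  assumes comm: "\<And>a b :: 'a. a * b = b * a"
  shows "card I = m \<Longrightarrow> finite I \<Longrightarrow> I \<subseteq> {..<n} \<Longrightarrow> e \<in> carrier_mat n n \<Longrightarrow> e * e = e \<Longrightarrow>
    (\<And>y. y \<in> carrier_vec n \<Longrightarrow> \<forall>i \<in> I. (e *\<^sub>v y) $ i = 0 \<Longrightarrow> e *\<^sub>v y = 0\<^sub>v n) \<Longrightarrow>
    \<exists>r \<le> m. mat_trace e = of_nat r \<and> (r = 0 \<longrightarrow> e = 0\<^sub>m n n)"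
proof (induction m arbitrary: I e)
  case 0
  then have "e *\<^sub>v unit_vec n j = 0\<^sub>m n n *\<^sub>v unit_vec n j" for j by simp
  then have "e = 0\<^sub>m n n" using "0.prems"(4) by (intro mat_eq_by_unit_vecs[of _ n n]) auto
  then show ?case by (simp add: mat_trace_def)
next
  case (Suc m)
  note I = Suc.prems(1-3) and e = Suc.prems(4,5) and determined = Suc.prems(6)
  show ?case
  proof (cases "\<exists>i \<in> I. \<exists>j < n. e $$ (i, j) \<noteq> 0")
    case False
    have "(e *\<^sub>v y) $ i = 0" if "y \<in> carrier_vec n" "i \<in> I" for y i
      using False that I e(1) by (auto simp: scalar_prod_def)
    then have "e *\<^sub>v unit_vec n j = 0\<^sub>m n n *\<^sub>v unit_vec n j" for j
      using determined by simp
    then have "e = 0\<^sub>m n n" using e(1) by (intro mat_eq_by_unit_vecs[of _ n n]) auto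
    then show ?thesis by (intro exI[of _ 0]) (simp add: mat_trace_def)
  next
    case True
    then obtain i j where ij: "i \<in> I" "j < n" "e $$ (i, j) \<noteq> 0" by blast
    have i: "i < n" using ij I by auto
    obtain x where x: "x \<in> carrier_vec n" "e *\<^sub>v x = x" "x $ i = 1"
      using idempotent_fixed_vec[OF e i ij(2,3)] .
    define e' where "e' = mat n n (\<lambda>(a, b). e $$ (a, b) - x $ a * e $$ (i, b))"
    note e' = idempotent_remove_rank_one[OF e x i, folded e'_def]
    have "e' *\<^sub>v y = 0\<^sub>v n" if y: "y \<in> carrier_vec n" and "\<forall>i' \<in> I - {i}. (e' *\<^sub>v y) $ i' = 0" for y
    proof -
      have "\<forall>i' \<in> I. (e *\<^sub>v (e' *\<^sub>v y)) $ i' = 0" using that e'(3,4)[OF y] by auto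
      then show ?thesis using determined[of "e' *\<^sub>v y"] e'(1,3) y by simp
    qed
    then obtain r where "r \<le> m" "mat_trace e' = of_nat r"
      using Suc.IH[of "I - {i}" e'] I ij(1) e'(1,2) by fastforce
    then show ?thesis using e'(5)[OF comm] by (intro exI[of _ "Suc r"]) (simp add: add.commute)
  qed
qed

section \<open>Matrices over F3\<close>

lemma not_nil_clean_mat_diag_F3:
  fixes d :: "'a::division_ring"
  assumes F3: "\<forall>x::'a. x = 0 \<or> x = 1 \<or> x = -1" "(1::'a) \<noteq> -1" and n: "2 \<le> n" and d: "d \<noteq> 0"
  shows "\<not> nil_clean_mat n (mat_diag n (\<lambda>i. if i = 0 then d else if i = 1 then - d else 0))"
proof
  define f :: "nat \<Rightarrow> 'a" where "f i = (if i = 0 then d else if i = 1 then - d else 0)" for i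
  define A where "A = mat_diag n f"
  assume "nil_clean_mat n (mat_diag n (\<lambda>i. if i = 0 then d else if i = 1 then - d else 0))"
  then obtain e q where e: "e \<in> carrier_mat n n" "e * e = e"
    and q: "q \<in> carrier_mat n n" "nilpotent_mat n q" and A_eq: "A = e + q"
    unfolding nil_clean_mat_def A_def f_def by blast
  have comm: "\<And>a b :: 'a. a * b = b * a" by (rule mult_commute_if_trivial_elements[OF F3(1)])
  have "e *\<^sub>v y = 0\<^sub>v n" if y: "y \<in> carrier_vec n" and "\<forall>i \<in> {0, 1}. (e *\<^sub>v y) $ i = 0" for y
  proof (rule nil_clean_image_kernel[OF e q A_eq y])
    show "A *\<^sub>v (e *\<^sub>v y) = 0\<^sub>v n"
      using that e(1) by (auto simp: A_def mat_diag_mult_vec f_def intro!: eq_vecI)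
  qed
  then obtain r where r: "r \<le> 2" "mat_trace e = of_nat r" "r = 0 \<longrightarrow> e = 0\<^sub>m n n"
    using mat_trace_idempotent[OF comm, of "{0, 1}" 2 n e] n e by fastforce
  have "mat_trace A = (\<Sum>i<n. f i)" by (simp add: A_def mat_trace_def mat_diag_def)
  also have "\<dots> = (\<Sum>i \<in> {0, 1}. f i)"
    using n by (intro sum.mono_neutral_right) (auto simp: f_def)
  also have "\<dots> = 0" by (simp add: f_def)
  finally have "mat_trace e + mat_trace q = 0"
    using A_eq mat_trace_add[OF e(1) q(1)] by simp
  then have "(of_nat r :: 'a) = 0" using r(2) mat_trace_nilpotent[OF comm q] by simp
  moreover have "(2 :: 'a) \<noteq> 0" using F3(2) by (metis add_eq_0_iff one_add_one)
  ultimately have "r = 0" using r(1) by (auto simp: le_Suc_eq numeral_2_eq_2)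
  then have "nilpotent_mat n A" using r(3) A_eq q e(1) by simp
  moreover have "\<not> nilpotent_mat n A" unfolding A_def using n d by (intro mat_diag_not_nilpotent[of 0]) (auto simp: f_def)
  ultimately show False by contradiction
qed

lemma not_GWNC_ring_mat_F3:
  assumes F3: "\<forall>x::'a::division_ring. x = 0 \<or> x = 1 \<or> x = -1" "(1::'a) \<noteq> -1" and n: "3 \<le> n"
  shows "\<not> GWNC (ring_mat TYPE('a) n ())"
proof -
  let ?A = "mat_diag n (\<lambda>i. if i = 0 then 1 else if i = 1 then - 1 else 0 :: 'a)"
  have "- ?A = mat_diag n (\<lambda>i. if i = 0 then - 1 else if i = 1 then - (- 1) else 0 :: 'a)"
    unfolding uminus_mat_diag by (rule arg_cong[of _ _ "mat_diag n"]) auto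
  then have "\<not> nil_clean_mat n ?A" "\<not> nil_clean_mat n (- ?A)"
    using not_nil_clean_mat_diag_F3[OF F3, of n] n by auto
  moreover have "\<not> invertible_mat ?A" using n by (intro mat_diag_not_invertible[of 2]) auto
  ultimately show ?thesis unfolding GWNC_ring_mat_iff using mat_diag_dim by blast
qed

lemma index_mult_mat_2:
  assumes "A \<in> carrier_mat 2 2" "B \<in> carrier_mat 2 2" "i < 2" "j < 2"
  shows "(A * B) $$ (i, j) = A $$ (i, 0) * B $$ (0, j) + A $$ (i, 1) * B $$ (1, j)"
  using assms by (simp add: scalar_prod_def numeral_2_eq_2)

lemma det_singular_mat_2:
  fixes A :: "'a::division_ring mat"
  assumes comm: "\<And>x y :: 'a. x * y = y * x" and A: "A \<in> carrier_mat 2 2" and singular: "\<not> invertible_mat A"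
  shows "A $$ (0, 0) * A $$ (1, 1) - A $$ (0, 1) * A $$ (1, 0) = 0"
proof (rule ccontr)
  have lcomm: "\<And>x y z :: 'a. x * (y * z) = y * (x * z)" by (metis comm mult.assoc)
  define a b c d where "a = A $$ (0, 0)" and "b = A $$ (0, 1)" and "c = A $$ (1, 0)" and "d = A $$ (1, 1)"
  have entries: "A $$ (0, 0) = a" "A $$ (0, Suc 0) = b" "A $$ (Suc 0, 0) = c" "A $$ (Suc 0, Suc 0) = d"
    by (simp_all add: a_def b_def c_def d_def)
  assume "A $$ (0, 0) * A $$ (1, 1) - A $$ (0, 1) * A $$ (1, 0) \<noteq> 0"
  then have nonzero: "a * d - b * c \<noteq> 0" by (simp add: a_def b_def c_def d_def)
  define t where "t = inverse (a * d - b * c)"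
  have t: "(a * d - b * c) * t = 1" unfolding t_def using nonzero by simp
  define B :: "'a mat" where "B = mat 2 2 (\<lambda>(i, j). (if i = 0 \<and> j = 0 then d else
      if i = 0 then - b else if j = 0 then - c else a) * t)"
  have B: "B \<in> carrier_mat 2 2" unfolding B_def by simp
  have B_entries: "B $$ (0, 0) = d * t" "B $$ (0, Suc 0) = - b * t"
    "B $$ (Suc 0, 0) = - c * t" "B $$ (Suc 0, Suc 0) = a * t" unfolding B_def by auto
  have t': "a * (d * t) - b * (c * t) = 1" using t by (simp add: left_diff_distrib mult.assoc)
  have "A * B = 1\<^sub>m 2"
  proof (rule eq_matI)
    fix i j assume "i < dim_row (1\<^sub>m 2 :: 'a mat)" "j < dim_col (1\<^sub>m 2 :: 'a mat)"
    then have ij: "i < 2" "j < 2" by auto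
    show "(A * B) $$ (i, j) = 1\<^sub>m 2 $$ (i, j)"
      unfolding index_mult_mat_2[OF A B ij] using ij t'
      by (auto simp: less_2_cases_iff entries B_entries ring_distribs mult.assoc comm lcomm)
  qed (use A B in auto)
  moreover have "B * A = 1\<^sub>m 2"
  proof (rule eq_matI)
    fix i j assume "i < dim_row (1\<^sub>m 2 :: 'a mat)" "j < dim_col (1\<^sub>m 2 :: 'a mat)"
    then have ij: "i < 2" "j < 2" by auto
    show "(B * A) $$ (i, j) = 1\<^sub>m 2 $$ (i, j)"
      unfolding index_mult_mat_2[OF B A ij] using ij t'
      by (auto simp: less_2_cases_iff entries B_entries ring_distribs mult.assoc comm lcomm)
  qed (use A B in auto)
  ultimately have "invertible_mat A" using A B unfolding invertible_mat_def inverts_mat_def by auto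
  with singular show False ..
qed

lemma square_singular_mat_2:
  fixes A :: "'a::division_ring mat"
  assumes comm: "\<And>x y :: 'a. x * y = y * x" and A: "A \<in> carrier_mat 2 2" and singular: "\<not> invertible_mat A"
  shows "A * A = (A $$ (0, 0) + A $$ (1, 1)) \<cdot>\<^sub>m A"
proof -
  have lcomm: "\<And>x y z :: 'a. x * (y * z) = y * (x * z)" by (metis comm mult.assoc)
  define a b c d where "a = A $$ (0, 0)" and "b = A $$ (0, 1)" and "c = A $$ (1, 0)" and "d = A $$ (1, 1)"
  have entries: "A $$ (0, 0) = a" "A $$ (0, Suc 0) = b" "A $$ (Suc 0, 0) = c" "A $$ (Suc 0, Suc 0) = d"
    by (simp_all add: a_def b_def c_def d_def)
  have det: "b * c = a * d"
    using det_singular_mat_2[OF comm A singular] by (simp add: a_def b_def c_def d_def)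
  show ?thesis unfolding a_def[symmetric] d_def[symmetric]
  proof (rule eq_matI)
    fix i j assume "i < dim_row ((a + d) \<cdot>\<^sub>m A)" "j < dim_col ((a + d) \<cdot>\<^sub>m A)"
    then have ij: "i < 2" "j < 2" using A by auto
    show "(A * A) $$ (i, j) = ((a + d) \<cdot>\<^sub>m A) $$ (i, j)"
      unfolding index_mult_mat_2[OF A A ij] using ij A det
      by (auto simp: less_2_cases_iff entries ring_distribs mult.assoc comm lcomm)
  qed (use A in auto)
qed

lemma GWNC_ring_mat_2_F3:
  assumes F3: "\<forall>x::'a::division_ring. x = 0 \<or> x = 1 \<or> x = -1"
  shows "GWNC (ring_mat TYPE('a) 2 ())"
  unfolding GWNC_ring_mat_iff
proof (intro ballI impI)
  fix A :: "'a mat"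
  assume A: "A \<in> carrier_mat 2 2" and singular: "\<not> invertible_mat A"
  define t where "t = A $$ (0, 0) + A $$ (1, 1)"
  have square: "A * A = t \<cdot>\<^sub>m A"
    unfolding t_def by (rule square_singular_mat_2[OF mult_commute_if_trivial_elements[OF F3] A singular])
  consider "t = 0" | "t = 1" | "t = -1" using F3 by blast
  then show "nil_clean_mat 2 A \<or> nil_clean_mat 2 (- A)"
  proof cases
    case 1
    moreover have "0 \<cdot>\<^sub>m A = 0\<^sub>m 2 2" using A by (auto intro!: eq_matI)
    ultimately have "A ^\<^sub>m 2 = 0\<^sub>m 2 2" using square A by (simp add: numeral_2_eq_2)
    then show ?thesis using A by (auto intro!: nil_clean_mat_nilpotent simp: nilpotent_mat_def)
  next
    case 2
    then show ?thesis using square A by (auto intro!: nil_clean_mat_idempotent)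
  next
    case 3
    moreover have "(- 1) \<cdot>\<^sub>m A = - A" by (auto intro!: eq_matI)
    ultimately have "(- A) * (- A) = - A" using square A by simp
    then show ?thesis using A by (auto intro!: nil_clean_mat_idempotent)
  qed
qed

section \<open>Matrices over F2\<close>

definition shift_mat :: "nat \<Rightarrow> 'a::semiring_1 mat" where
  "shift_mat k = mat k k (\<lambda>(i, j). if i = Suc j then 1 else 0)"

lemma dim_shift_mat [simp]: "dim_row (shift_mat k) = k" "dim_col (shift_mat k) = k"
  by (simp_all add: shift_mat_def)

lemma shift_mat_carrier [simp]: "shift_mat k \<in> carrier_mat k k"
  by (simp add: shift_mat_def)

lemma index_shift_mat [simp]:
  "i < k \<Longrightarrow> j < k \<Longrightarrow> shift_mat k $$ (i, j) = (if i = Suc j then 1 else 0)"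
  by (simp add: shift_mat_def)

lemma index_pow_shift_mat:
  "i < k \<Longrightarrow> j < k \<Longrightarrow> (shift_mat k ^\<^sub>m m) $$ (i, j) = (if i = j + m then 1 else 0 :: 'a::semiring_1)"
proof (induction m arbitrary: i j)
  case 0
  then show ?case by simp
next
  case (Suc m)
  let ?S = "shift_mat k :: 'a mat"
  have "(?S ^\<^sub>m Suc m) $$ (i, j) = (\<Sum>l \<in> {0..<k}. (?S ^\<^sub>m m) $$ (i, l) * ?S $$ (l, j))"
    using Suc.prems by (simp add: scalar_prod_def)
  also have "\<dots> = (\<Sum>l \<in> {0..<k}. if l = Suc j then (?S ^\<^sub>m m) $$ (i, Suc j) else 0)"
    using Suc.prems by (intro sum.cong) auto
  also have "\<dots> = (if Suc j < k then (?S ^\<^sub>m m) $$ (i, Suc j) else 0)" by simp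
  also have "\<dots> = (if i = j + Suc m then 1 else 0)" using Suc.prems Suc.IH[of i "Suc j"] by auto
  finally show ?case .
qed

lemma nilpotent_shift_mat: "nilpotent_mat k (shift_mat k :: 'a::semiring_1 mat)"
proof -
  have "shift_mat k ^\<^sub>m k = (0\<^sub>m k k :: 'a mat)"
    by (rule eq_matI) (auto simp: index_pow_shift_mat)
  then show ?thesis unfolding nilpotent_mat_def by blast
qed

(* A maps e_0 to e_1, ..., e_(k-2) to e_(k-1); for k = n this makes A a companion matrix *)
definition shifts_unit_vecs :: "nat \<Rightarrow> nat \<Rightarrow> 'a::semiring_1 mat \<Rightarrow> bool" where
  "shifts_unit_vecs n k A \<longleftrightarrow> (\<forall>j. Suc j < k \<longrightarrow> A *\<^sub>v unit_vec n j = unit_vec n (Suc j))"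

lemma index_shifts_unit_vecs:
  assumes "A \<in> carrier_mat n n" "shifts_unit_vecs n k A" "Suc j < k" "k \<le> n" "i < n"
  shows "A $$ (i, j) = (if i = Suc j then 1 else 0)"
  using assms mult_mat_vec_unit_vec_index[of A n n j i] unfolding shifts_unit_vecs_def by auto

lemma shifts_unit_vecs_transvection_conj:
  assumes A: "(A :: 'a::ring_1 mat) \<in> carrier_mat n n" and w: "w \<in> carrier_vec n"
    and i: "i < n" "k \<le> i" and shifts: "shifts_unit_vecs n k A"
  shows "shifts_unit_vecs n k (transvection n (- w) i * A * transvection n w i)"
  unfolding shifts_unit_vecs_def
proof (intro allI impI)
  fix j assume j: "Suc j < k"
  then have "(transvection n (- w) i * A * transvection n w i) *\<^sub>v unit_vec n j
      = transvection n (- w) i *\<^sub>v unit_vec n (Suc j)"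
    using transvection_conj_mult_unit_vec[OF A w, of i j] shifts i unfolding shifts_unit_vecs_def by simp
  also have "\<dots> = unit_vec n (Suc j)" using w i j by (intro transvection_fixes_unit_vec) auto
  finally show "(transvection n (- w) i * A * transvection n w i) *\<^sub>v unit_vec n j = unit_vec n (Suc j)" .
qed

lemma extend_shifts_unit_vecs:
  assumes A: "(A :: 'a::ring_1 mat) \<in> carrier_mat n n" and k: "0 < k" "k < n"
    and shifts: "shifts_unit_vecs n k A" and one: "(A *\<^sub>v unit_vec n (k - 1)) $ k = 1"
  obtains A' P Q where "similar_mat_wit A A' P Q" "shifts_unit_vecs n (Suc k) A'"
proof -
  define v where "v = A *\<^sub>v unit_vec n (k - 1)"
  define w where "w = v - unit_vec n k"
  have v: "v \<in> carrier_vec n" using A by (simp add: v_def)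
  have w: "w \<in> carrier_vec n" "w $ k = 0" using v k one by (auto simp: w_def v_def)
  define A' where "A' = transvection n (- w) k * A * transvection n w k"
  have "A' *\<^sub>v unit_vec n (k - 1) = transvection n (- w) k *\<^sub>v v"
    unfolding A'_def v_def using A w k by (intro transvection_conj_mult_unit_vec) auto
  also have "\<dots> = unit_vec n k"
    using v w k one by (auto simp: transvection_mult_vec w_def v_def intro!: eq_vecI)
  finally have last: "A' *\<^sub>v unit_vec n (k - 1) = unit_vec n k" .
  have "shifts_unit_vecs n k A'"
    unfolding A'_def using A w k shifts by (intro shifts_unit_vecs_transvection_conj) auto
  then have "shifts_unit_vecs n (Suc k) A'"
    unfolding shifts_unit_vecs_def
  proof (intro allI impI)
    fix j assume shifted: "\<forall>j. Suc j < k \<longrightarrow> A' *\<^sub>v unit_vec n j = unit_vec n (Suc j)"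
      and j: "Suc j < Suc k"
    show "A' *\<^sub>v unit_vec n j = unit_vec n (Suc j)"
    proof (cases "Suc j < k")
      case False
      then have "j = k - 1" "Suc j = k" using j k by auto
      then show ?thesis using last by simp
    qed (use shifted in blast)
  qed
  moreover have "similar_mat_wit A A' (transvection n w k) (transvection n (- w) k)"
    unfolding A'_def using A w k by (intro similar_mat_wit_transvection_conj) auto
  ultimately show ?thesis using that by blast
qed

lemma four_block_mat_of_shifts_unit_vecs:
  assumes A: "(A :: 'a::semiring_1 mat) \<in> carrier_mat n n" and k: "0 < k" "k \<le> n"
    and shifts: "shifts_unit_vecs n k A"
    and invariant: "\<And>i. k \<le> i \<Longrightarrow> i < n \<Longrightarrow> (A *\<^sub>v unit_vec n (k - 1)) $ i = 0"
  obtains C X B where "C \<in> carrier_mat k k" "X \<in> carrier_mat k (n - k)" "B \<in> carrier_mat (n - k) (n - k)"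
    "shifts_unit_vecs k k C" "A = four_block_mat C X (0\<^sub>m (n - k) k) B"
proof -
  obtain C X Z B where split: "split_block A k k = (C, X, Z, B)" by (metis prod_cases4)
  have "dim_row A = k + (n - k)" "dim_col A = k + (n - k)" using A k by auto
  note blocks = split_block[OF split this]
  have A_entry: "A $$ (i, j) = (if i = Suc j then 1 else 0)" if "i < n" "Suc j < k" for i j
    using index_shifts_unit_vecs[OF A shifts] that k by auto
  have A_last: "A $$ (i, k - 1) = 0" if "k \<le> i" "i < n" for i
    using invariant[OF that] A that k by simp
  have "Z = 0\<^sub>m (n - k) k"
  proof (rule eq_matI)
    fix i j assume "i < dim_row (0\<^sub>m (n - k) k :: 'a mat)" "j < dim_col (0\<^sub>m (n - k) k :: 'a mat)"
    then have ij: "i < n - k" "j < k" by auto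
    have "Z $$ (i, j) = A $$ (i + k, j)" using split A ij unfolding split_block_def Let_def by auto
    also have "\<dots> = 0"
    proof (cases "Suc j < k")
      case True
      then show ?thesis using ij A_entry[of "i + k" j] by auto
    next
      case False
      then have "j = k - 1" using ij by auto
      then show ?thesis using ij A_last[of "i + k"] by auto
    qed
    finally show "Z $$ (i, j) = 0\<^sub>m (n - k) k $$ (i, j)" using ij by simp
  qed (use blocks in auto)
  moreover have "shifts_unit_vecs k k C"
    unfolding shifts_unit_vecs_def
  proof (intro allI impI)
    fix j assume j: "Suc j < k"
    show "C *\<^sub>v unit_vec k j = unit_vec k (Suc j)"
    proof (rule eq_vecI)
      fix i assume "i < dim_vec (unit_vec k (Suc j) :: 'a vec)"
      then have i: "i < k" by simp
      have "C $$ (i, j) = A $$ (i, j)" using split A i j k unfolding split_block_def Let_def by auto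
      then show "(C *\<^sub>v unit_vec k j) $ i = unit_vec k (Suc j) $ i"
        using blocks(1) i j k A_entry[of i j] by simp
    qed (use blocks in auto)
  qed
  ultimately show ?thesis using that blocks by simp
qed

lemma idempotent_mat_of_columns:
  assumes e: "(e :: 'a::semiring_1 mat) \<in> carrier_mat n n" and J: "J \<subseteq> {..<n}"
    and outside: "\<And>i j. i < n \<Longrightarrow> j < n \<Longrightarrow> j \<notin> J \<Longrightarrow> e $$ (i, j) = 0"
    and block: "\<And>i j. i \<in> J \<Longrightarrow> j \<in> J \<Longrightarrow> e $$ (i, j) = (if i = j then 1 else 0)"
  shows "e * e = e"
proof (rule eq_matI)
  fix i j assume "i < dim_row e" "j < dim_col e"
  then have ij: "i < n" "j < n" using e by auto
  have "(e * e) $$ (i, j) = (\<Sum>l \<in> {0..<n}. e $$ (i, l) * e $$ (l, j))"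
    using e ij by (simp add: scalar_prod_def)
  also have "\<dots> = (\<Sum>l \<in> {0..<n}. if l = j \<and> j \<in> J then e $$ (i, j) else 0)"
  proof (rule sum.cong)
    fix l assume "l \<in> {0..<n}"
    then have l: "l < n" by simp
    show "e $$ (i, l) * e $$ (l, j) = (if l = j \<and> j \<in> J then e $$ (i, j) else 0)"
    proof (cases "l \<in> J")
      case True
      then show ?thesis using ij l by (cases "j \<in> J") (auto simp: outside block)
    qed (use ij l outside in auto)
  qed simp
  also have "\<dots> = e $$ (i, j)" using ij outside by (cases "j \<in> J") auto
  finally show "(e * e) $$ (i, j) = e $$ (i, j)" .
qed (use e in auto)

lemma nilpotent_mat_if_conjugate_shift:
  assumes q: "(q :: 'a::semiring_1 mat) \<in> carrier_mat k k" and P: "P \<in> carrier_mat k k" "P' \<in> carrier_mat k k"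
    and inverse: "P * P' = 1\<^sub>m k" "P' * P = 1\<^sub>m k" and conj: "q * P = P * shift_mat k"
  shows "nilpotent_mat k q"
proof -
  have "q = (q * P) * P'" using q P inverse(1) by (simp add: assoc_mult_mat[of q k k P k P' k])
  then have "q = P * shift_mat k * P'" unfolding conj .
  then have "similar_mat_wit q (shift_mat k) P P'"
    using q P inverse by (intro similar_mat_witI[of _ _ k]) auto
  then show ?thesis
    by (rule nilpotent_mat_similar[OF similar_mat_wit_sym shift_mat_carrier nilpotent_shift_mat])
qed

lemma nil_clean_companion_last_one:
  assumes C: "(C :: 'a::semiring_1 mat) \<in> carrier_mat (Suc L) (Suc L)"
    and shifts: "shifts_unit_vecs (Suc L) (Suc L) C" and last: "C $$ (L, L) = 1"
  shows "nil_clean_mat (Suc L) C"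
proof -
  define e :: "'a mat" where "e = mat (Suc L) (Suc L) (\<lambda>(i, j). if j = L then C $$ (i, L) else 0)"
  have e: "e \<in> carrier_mat (Suc L) (Suc L)" by (simp add: e_def)
  have C_entry: "C $$ (i, j) = (if i = Suc j then 1 else 0)" if "i < Suc L" "j < L" for i j
    using index_shifts_unit_vecs[OF C shifts] that by auto
  have "C = e + shift_mat (Suc L)"
  proof (rule eq_matI)
    fix i j assume "i < dim_row (e + shift_mat (Suc L))" "j < dim_col (e + shift_mat (Suc L))"
    then have ij: "i < Suc L" "j < Suc L" using e by auto
    show "C $$ (i, j) = (e + shift_mat (Suc L)) $$ (i, j)"
    proof (cases "j < L")
      case False
      then have "j = L" using ij by simp
      then show ?thesis using ij by (simp add: e_def)
    qed (use ij C_entry[of i j] in \<open>simp add: e_def\<close>)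
  qed (use C e in auto)
  moreover have "e * e = e"
    by (rule idempotent_mat_of_columns[OF e, of "{L}"]) (auto simp: e_def last)
  ultimately show ?thesis
    unfolding nil_clean_mat_def using e nilpotent_shift_mat shift_mat_carrier by blast
qed

context
  assumes F2: "\<forall>x::'a::ring_1. x = 0 \<or> x = 1" and char2: "(1::'a) + 1 = 0"
begin

lemma add_self_F2: "(x::'a) + x = 0"
  using F2 char2 by (cases "x = 0") auto

(*
  The matrix q = C + e sends
  e_0, ..., e_(L-2) to e_1, ..., e_(L-1), e_(L-1) to e_L + w, and e_L + w to 0; as the transvection
  maps e_L to e_L + w and fixes the other unit vectors, it conjugates q to the shift.
*)
lemma companion_F2_trace_zero_conjugate_shift:
  assumes C: "(C :: 'a mat) \<in> carrier_mat k k" and shifts: "shifts_unit_vecs k k C"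
    and k: "k = Suc L" "1 \<le> L" and last: "C $$ (L, L) = 0" and two: "L = 1 \<Longrightarrow> C $$ (0, 1) = 1"
    and \<gamma>_def: "\<gamma> = (if C $$ (L - 1, L) = 1 then 0 else 1)"
    and w_def: "w = vec k (\<lambda>i. if i = L - 1 then 1 else if i + 2 = L then \<gamma> else 0)"
    and e_def: "e = mat k k (\<lambda>(i, j). if j = L - 1 then w $ i
      else if j = L then (if i = L then 1 else if i + 1 < L then C $$ (i, L) + w $ i else 0) else 0)"
  shows "(C + e) * transvection k w L = transvection k w L * shift_mat k"
proof -
  have C_entry: "C $$ (i, j) = (if i = Suc j then 1 else 0)" if "i < k" "j < L" for i j
    using index_shifts_unit_vecs[OF C shifts] that k by auto
  have "C $$ (L - 1, L) = 0 \<or> C $$ (L - 1, L) = 1" using F2 by blast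
  then have \<gamma>: "C $$ (L - 1, L) + 1 + \<gamma> = 0" "L = 1 \<Longrightarrow> \<gamma> = 0"
    using char2 two by (auto simp: \<gamma>_def)
  have w: "w \<in> carrier_vec k" "w $ L = 0" using k by (auto simp: w_def)
  define q where "q = C + e"
  have e: "e \<in> carrier_mat k k" and q: "q \<in> carrier_mat k k" using C by (auto simp: e_def q_def)
  have e_entry: "e $$ (i, j) = (if j = L - 1 then w $ i
      else if j = L then (if i = L then 1 else if i + 1 < L then C $$ (i, L) + w $ i else 0) else 0)"
    if "i < k" "j < k" for i j
    using that by (simp add: e_def)
  have w_entry: "w $ i = (if i = L - 1 then 1 else if i + 2 = L then \<gamma> else 0)" if "i < k" for i
    using that by (simp add: w_def)
  define P where "P = transvection k w L"
  have q_entry: "q $$ (i, j) = C $$ (i, j) + e $$ (i, j)" if "i < k" "j < k" for i j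
    using that C e by (simp add: q_def)
  have qw: "(q *\<^sub>v w) $ i = q $$ (i, L - 1) + (if 2 \<le> L then q $$ (i, L - 2) * \<gamma> else 0)"
    if i: "i < k" for i
  proof -
    have "(q *\<^sub>v w) $ i = (\<Sum>l \<in> {0..<k}. (if l = L - 1 then q $$ (i, L - 1) else 0)
        + (if l + 2 = L then q $$ (i, L - 2) * \<gamma> else 0))"
      using q w i k by (auto simp: scalar_prod_def w_entry intro!: sum.cong)
    also have "\<dots> = q $$ (i, L - 1) + (if 2 \<le> L then q $$ (i, L - 2) * \<gamma> else 0)"
    proof -
      let ?X = "q $$ (i, L - 2) * \<gamma>"
      have "(\<Sum>l \<in> {0..<k}. if l + 2 = L then ?X else 0) = (if 2 \<le> L then ?X else 0)"
      proof (cases "2 \<le> L")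
        case True
        then have "(\<Sum>l \<in> {0..<k}. if l + 2 = L then ?X else 0) = (\<Sum>l \<in> {0..<k}. if l = L - 2 then ?X else 0)"
          by (intro sum.cong) auto
        moreover have "L - 2 \<in> {0..<k}" using k(1) by simp
        ultimately show ?thesis using True by simp
      qed simp
      moreover have "L - 1 \<in> {0..<k}" using k(1) by simp
      then have "(\<Sum>l \<in> {0..<k}. if l = L - 1 then q $$ (i, L - 1) else 0) = q $$ (i, L - 1)"
        by simp
      ultimately show ?thesis by (simp only: sum.distrib)
    qed
    finally show ?thesis .
  qed
  have intertwine: "q * P = P * shift_mat k"
  proof (rule eq_matI)
    fix i j assume "i < dim_row (P * shift_mat k)" "j < dim_col (P * shift_mat k)"
    then have ij: "i < k" "j < k" by (auto simp: P_def)
    have lhs: "(q * P) $$ (i, j) = q $$ (i, j) + (if j = L then (q *\<^sub>v w) $ i else 0)"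
      unfolding P_def using q w ij k by (intro index_mult_transvection_right) auto
    have rhs: "(P * shift_mat k) $$ (i, j) = (if i = Suc j then 1 else 0) + w $ i * (if L = Suc j then 1 else 0)"
      unfolding P_def using w ij k by (subst index_transvection_mult[of _ k k]) auto
    consider "j < L - 1" | "j = L - 1" | "j = L" using ij k by linarith
    then show "(q * P) $$ (i, j) = (P * shift_mat k) $$ (i, j)"
    proof cases
      case 1
      then have "j \<noteq> L" "L \<noteq> Suc j" "j \<noteq> L - 1" "j < L" by auto
      then show ?thesis unfolding lhs rhs using ij by (simp add: q_entry C_entry e_entry)
    next
      case 2
      then show ?thesis unfolding lhs rhs using ij k by (auto simp: q_entry C_entry e_entry)
    next
      case 3
      have "L \<noteq> L - 1" "L - 1 < k" "L < k" using k by auto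
      then have q_last: "q $$ (i, L) = C $$ (i, L) + (if i = L then 1 else if i + 1 < L then C $$ (i, L) + w $ i else 0)"
        and q_prev: "q $$ (i, L - 1) = (if i = L then 1 else 0) + w $ i"
        using ij k C_entry[of i "L - 1"] by (simp_all add: q_entry e_entry)
      have q_prev2: "q $$ (i, L - 2) = (if i = L - 1 then 1 else 0)" if "2 \<le> L"
      proof -
        have "L - 2 \<noteq> L - 1" "L - 2 \<noteq> L" "L - 2 < L" "L - 2 < k" "Suc (L - 2) = L - 1"
          using that k by auto
        then show ?thesis using ij C_entry[of i "L - 2"] that by (auto simp: q_entry e_entry)
      qed
      have "q $$ (i, L) + (q *\<^sub>v w) $ i = 0"
      proof -
        consider "i = L" | "i = L - 1" | "i + 1 < L" using ij k by linarith
        then show ?thesis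
        proof cases
          case 1
          then show ?thesis using q_last q_prev q_prev2 qw[OF ij(1)] last w(2) char2 by auto
        next
          case 2
          then show ?thesis
            using q_last q_prev q_prev2 qw[OF ij(1)] \<gamma> two char2 w_entry[OF ij(1)] k
            by (cases "2 \<le> L") (auto simp: add.assoc)
        next
          case 3
          then show ?thesis using q_last q_prev q_prev2 qw[OF ij(1)]
            by (auto simp: add.assoc[symmetric] add_self_F2)
        qed
      qed
      then show ?thesis unfolding lhs rhs using 3 ij k by simp
    qed
  qed (use q in \<open>auto simp: P_def\<close>)
  then show ?thesis unfolding P_def q_def .
qed

lemma nil_clean_companion_F2_trace_zero:
  assumes C: "(C :: 'a mat) \<in> carrier_mat k k" and shifts: "shifts_unit_vecs k k C"
    and k: "k = Suc L" "1 \<le> L" and last: "C $$ (L, L) = 0" and two: "L = 1 \<Longrightarrow> C $$ (0, 1) = 1"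
    and \<gamma>_def: "\<gamma> = (if C $$ (L - 1, L) = 1 then 0 else 1)"
    and w_def: "w = vec k (\<lambda>i. if i = L - 1 then 1 else if i + 2 = L then \<gamma> else 0)"
    and e_def: "e = mat k k (\<lambda>(i, j). if j = L - 1 then w $ i
      else if j = L then (if i = L then 1 else if i + 1 < L then C $$ (i, L) + w $ i else 0) else 0)"
  shows "nil_clean_mat k C"
proof -
  have w: "w \<in> carrier_vec k" "w $ L = 0" using k by (auto simp: w_def)
  have e: "e \<in> carrier_mat k k" and q: "C + e \<in> carrier_mat k k" using C by (auto simp: e_def)
  have sum: "C = e + (C + e)" using C e by (auto simp: add.left_commute add_self_F2 intro!: eq_matI)
  have e_entry: "e $$ (i, j) = (if j = L - 1 then w $ i
      else if j = L then (if i = L then 1 else if i + 1 < L then C $$ (i, L) + w $ i else 0) else 0)"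
    if "i < k" "j < k" for i j
    using that by (simp add: e_def)
  have w_entry: "w $ i = (if i = L - 1 then 1 else if i + 2 = L then \<gamma> else 0)" if "i < k" for i
    using that by (simp add: w_def)
  have idem: "e * e = e"
    by (rule idempotent_mat_of_columns[OF e, of "{L - 1, L}"]) (use k in \<open>auto simp: e_entry w_entry\<close>)
  have "transvection k w L * transvection k (- w) L = 1\<^sub>m k" "transvection k (- w) L * transvection k w L = 1\<^sub>m k"
    using transvection_inverse[OF w(1) _ w(2)] transvection_inverse[of "- w" k L] w k by simp_all
  then have "nilpotent_mat k (C + e)"
    by (rule nilpotent_mat_if_conjugate_shift[OF q transvection_carrier transvection_carrier _ _
          companion_F2_trace_zero_conjugate_shift[OF assms]])
  then show ?thesis unfolding nil_clean_mat_def using e q idem sum by blast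
qed

lemma nil_clean_companion_F2:
  assumes C: "(C :: 'a mat) \<in> carrier_mat k k" and shifts: "shifts_unit_vecs k k C" and k: "0 < k"
  shows "nil_clean_mat k C"
proof -
  obtain L where L: "k = Suc L" using k by (cases k) auto
  have C_entry: "C $$ (i, j) = (if i = Suc j then 1 else 0)" if "i < k" "j < L" for i j
    using index_shifts_unit_vecs[OF C shifts] that L by auto
  consider (last_one) "C $$ (L, L) = 1" | (shift) "C = shift_mat k"
    | (trace_zero) "C $$ (L, L) = 0" "1 \<le> L" "L = 1 \<Longrightarrow> C $$ (0, 1) = 1"
  proof (cases "C $$ (L, L) = 1")
    case False
    then have last: "C $$ (L, L) = 0" using F2 by blast
    show thesis
    proof (cases "L = 0 \<or> (L = 1 \<and> C $$ (0, 1) = 0)")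
      case True
      have "C = shift_mat k"
      proof (rule eq_matI)
        fix i j assume "i < dim_row (shift_mat k)" "j < dim_col (shift_mat k)"
        then have ij: "i < k" "j < k" by auto
        show "C $$ (i, j) = shift_mat k $$ (i, j)"
        proof (cases "j < L")
          case False
          then have "j = L" using ij L by auto
          then show ?thesis using True last ij L by (auto simp: less_Suc_eq)
        qed (use ij C_entry in auto)
      qed (use C in auto)
      then show thesis by (rule that(2))
    next
      case False
      then show thesis using that(3) last F2 by auto
    qed
  qed (rule that(1))
  then show ?thesis
  proof cases
    case last_one
    then show ?thesis using nil_clean_companion_last_one[of C L] C shifts L by simp
  next
    case shift
    then show ?thesis using nil_clean_mat_nilpotent nilpotent_shift_mat C by metis
  next
    case trace_zero
    then show ?thesis using nil_clean_companion_F2_trace_zero[OF C shifts L] by blast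
  qed
qed

lemma similar_shifts_unit_vecs_coord_one_F2:
  assumes A: "(A :: 'a mat) \<in> carrier_mat n n" and k: "0 < k" and shifts: "shifts_unit_vecs n k A"
    and i: "k \<le> i" "i < n" and nonzero: "(A *\<^sub>v unit_vec n (k - 1)) $ i \<noteq> 0"
  obtains A' P Q where "similar_mat_wit A A' P Q" "shifts_unit_vecs n k A'"
    "(A' *\<^sub>v unit_vec n (k - 1)) $ k = 1"
proof (cases "(A *\<^sub>v unit_vec n (k - 1)) $ k = 0")
  case False
  then show ?thesis using that[OF similar_mat_wit_refl[OF A] shifts] F2 by blast
next
  case True
  define w :: "'a vec" where "w = unit_vec n k"
  have w: "w \<in> carrier_vec n" "w $ i = 0" using True nonzero i by (auto simp: w_def)
  define A' where "A' = transvection n (- w) i * A * transvection n w i"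
  have "(A' *\<^sub>v unit_vec n (k - 1)) $ k
      = (transvection n (- w) i *\<^sub>v (A *\<^sub>v unit_vec n (k - 1))) $ k"
    unfolding A'_def using A w i k by (subst transvection_conj_mult_unit_vec) auto
  also have "\<dots> = (A *\<^sub>v unit_vec n (k - 1)) $ k - (A *\<^sub>v unit_vec n (k - 1)) $ i"
    using A w i k by (simp add: transvection_mult_vec w_def)
  also have "\<dots> = 1"
  proof -
    have "(A *\<^sub>v unit_vec n (k - 1)) $ i = 1" using nonzero F2 by blast
    moreover have "- 1 = (1 :: 'a)" using char2 neg_eq_iff_add_eq_0 by blast
    ultimately show ?thesis using True by simp
  qed
  finally have "(A' *\<^sub>v unit_vec n (k - 1)) $ k = 1" .
  moreover have "shifts_unit_vecs n k A'"
    unfolding A'_def using A w i shifts by (intro shifts_unit_vecs_transvection_conj) auto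
  moreover have "similar_mat_wit A A' (transvection n w i) (transvection n (- w) i)"
    unfolding A'_def using A w i by (intro similar_mat_wit_transvection_conj) auto
  ultimately show ?thesis using that by blast
qed

lemma nil_clean_mat_shifts_unit_vecs_F2:
  assumes smaller: "\<And>m (B :: 'a mat). m < n \<Longrightarrow> B \<in> carrier_mat m m \<Longrightarrow> nil_clean_mat m B"
  shows "(A :: 'a mat) \<in> carrier_mat n n \<Longrightarrow> 0 < k \<Longrightarrow> k \<le> n \<Longrightarrow> shifts_unit_vecs n k A
    \<Longrightarrow> nil_clean_mat n A"
proof (induction "n - k" arbitrary: k A rule: less_induct)
  case less
  note A = less.prems(1) and k = less.prems(2,3) and shifts = less.prems(4)
  show ?case
  proof (cases "\<exists>i. k \<le> i \<and> i < n \<and> (A *\<^sub>v unit_vec n (k - 1)) $ i \<noteq> 0")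
    case True
    then obtain i where i: "k \<le> i" "i < n" "(A *\<^sub>v unit_vec n (k - 1)) $ i \<noteq> 0" by blast
    obtain A1 P1 Q1 where sim1: "similar_mat_wit A A1 P1 Q1" and shifts1: "shifts_unit_vecs n k A1"
      and one: "(A1 *\<^sub>v unit_vec n (k - 1)) $ k = 1"
      using similar_shifts_unit_vecs_coord_one_F2[OF A k(1) shifts i] by blast
    have A1: "A1 \<in> carrier_mat n n" using similar_mat_witD2[OF A sim1] by simp
    obtain A2 P2 Q2 where sim2: "similar_mat_wit A1 A2 P2 Q2" and shifts2: "shifts_unit_vecs n (Suc k) A2"
      using extend_shifts_unit_vecs[OF A1 k(1) _ shifts1 one] i by auto
    have A2: "A2 \<in> carrier_mat n n" using similar_mat_witD2[OF A1 sim2] by simp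
    have "nil_clean_mat n A2" using less.hyps[of "Suc k" A2] A2 shifts2 i k by auto
    then show ?thesis using nil_clean_mat_similar[OF similar_mat_wit_trans[OF sim1 sim2] _ A] by blast
  next
    case False
    then obtain C X B where C: "C \<in> carrier_mat k k" and X: "X \<in> carrier_mat k (n - k)"
      and B: "B \<in> carrier_mat (n - k) (n - k)" and companion: "shifts_unit_vecs k k C"
      and A_eq: "A = four_block_mat C X (0\<^sub>m (n - k) k) B"
      using four_block_mat_of_shifts_unit_vecs[OF A k shifts] by blast
    have "nil_clean_mat (k + (n - k)) A"
      unfolding A_eq using k
      by (intro nil_clean_four_block_mat[OF C X B] nil_clean_companion_F2[OF C companion] smaller[OF _ B])
        auto
    then show ?thesis using k by simp
  qed
qed

lemma nil_clean_mat_F2: "(A :: 'a mat) \<in> carrier_mat n n \<Longrightarrow> nil_clean_mat n A"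
proof (induction n arbitrary: A rule: less_induct)
  case (less n)
  show ?case
  proof (cases "n = 0")
    case True
    have "nilpotent_mat n A" unfolding nilpotent_mat_def using less.prems True
      by (intro exI[of _ 0]) (auto intro!: eq_matI)
    then show ?thesis by (rule nil_clean_mat_nilpotent[OF less.prems])
  next
    case False
    have "shifts_unit_vecs n 1 A" by (simp add: shifts_unit_vecs_def)
    then show ?thesis using nil_clean_mat_shifts_unit_vecs_F2[OF less.IH less.prems, of 1] False by simp
  qed
qed

lemma GWNC_ring_mat_F2: "GWNC (ring_mat TYPE('a) n ())"
  unfolding GWNC_ring_mat_iff using nil_clean_mat_F2 by blast

end

theorem lemma2p34:
  fixes n :: nat
  assumes "n \<ge> 2"
  shows "GWNC (ring_mat TYPE('a::division_ring) n ()) \<longleftrightarrow>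
           ((\<exists>f :: 'a \<Rightarrow> 2. ring_iso_ty f) \<or>
            ((\<exists>f :: 'a \<Rightarrow> 3. ring_iso_ty f) \<and> n = 2))"
proof
  assume GWNC: "GWNC (ring_mat TYPE('a) n ())"
  then have elements: "\<forall>x::'a. x = 0 \<or> x = 1 \<or> x = -1"
    using GWNC_ring_mat_trivial_elements[OF assms] by blast
  show "(\<exists>f :: 'a \<Rightarrow> 2. ring_iso_ty f) \<or> ((\<exists>f :: 'a \<Rightarrow> 3. ring_iso_ty f) \<and> n = 2)"
  proof (cases "(1::'a) = -1")
    case True
    have "\<forall>x::'a. x = 0 \<or> x = 1" using elements unfolding True[symmetric] by blast
    moreover have "(1::'a) + 1 = 0" using True eq_neg_iff_add_eq_0 by blast
    ultimately show ?thesis using ring_iso_ty_2_iff by blast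
  next
    case False
    then have "\<not> 3 \<le> n" using GWNC not_GWNC_ring_mat_F3[OF elements] by blast
    then have "n = 2" using assms by linarith
    then show ?thesis using elements False ring_iso_ty_3_iff by blast
  qed
next
  assume "(\<exists>f :: 'a \<Rightarrow> 2. ring_iso_ty f) \<or> ((\<exists>f :: 'a \<Rightarrow> 3. ring_iso_ty f) \<and> n = 2)"
  then show "GWNC (ring_mat TYPE('a) n ())"
    using GWNC_ring_mat_F2 GWNC_ring_mat_2_F3 ring_iso_ty_2_iff ring_iso_ty_3_iff by blast
qed

end
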